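(* Let $P_{X,Y}$ be a non-trivial primitive on finite sets $\mathcal X\times\mathcal Y$. Then its canonical embedding $|\psi_{\vec 0}\rangle=\sum_{x,y}\sqrt{P_{X,Y}(x,y)}\,|x\rangle_A|y\rangle_B$ is a non-trivial regular embedding, i.e. $S(X\searrow Y\,|\,B)>0$ and $S(Y\searrow X\,|\,A)>0$.
   Context: A primitive is a joint probability distribution $P_{X,Y}$ on finite sets $\mathcal X\times\mathcal Y$. Dependent part: for $f_X(x):=P_{Y|X=x}$ (the conditional distribution of $Y$ given $X=x$), define the random variable $X\searrow Y:=f_X(X)$; symmetrically $Y\searrow X:=f_Y(Y)$ with $f_Y(y)=P_{X|Y=y}$. $P_{X,Y}$ is trivial if $H(X\searrow Y\,|\,Y)=0$ (equivalently $H(Y\searrow X\,|\,X)=0$), non-trivial otherwise; $H$ is Shannon entropy (base 2). A regular embedding of $P_{X,Y}$ is a state in $\mathcal H_A\otimes\mathcal H_B$ (with computational bases $\{|x\rangle\}_{x\in\mathcal X}$, $\{|y\rangle\}_{y\in\mathcal Y}$) of the form $\sum_{x,y}e^{i\theta(x,y)}\sqrt{P_{X,Y}(x,y)}|x\rangle_A|y\rangle_B$ for a real function $\theta$; the canonical one has $\theta\equiv 0$. A regular embedding is trivial if $S(X\searrow Y|B)=0$ or $S(Y\searrow X|A)=0$, and non-trivial otherwise. Here $S(X\searrow Y|B)$ is the von Neumann conditional entropy $S(PQ)-S(Q)$ of the classical-quantum state obtained by measuring register $A$ in the computational basis, obtaining $X$, and computing $X\searrow Y$, with $B$ kept quantum;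 $S(Y\searrow X|A)$ is defined symmetrically. *)

theory Defs
  imports "HOL-Analysis.Analysis" "Jordan_Normal_Form.Char_Poly"
begin

text \<open>Finite sets are modelled as X = {0..<m}, Y = {0..<n}; a primitive is
  P :: nat => nat => real (P x y = P_{X,Y}(x,y)).\<close>

definition primitive :: "nat \<Rightarrow> nat \<Rightarrow> (nat \<Rightarrow> nat \<Rightarrow> real) \<Rightarrow> bool" where
  "primitive m n P \<longleftrightarrow> (\<forall>x y. 0 \<le> P x y) \<and> (\<forall>x y. (m \<le> x \<or> n \<le> y) \<longrightarrow> P x y = 0)
     \<and> (\<Sum>x<m. \<Sum>y<n. P x y) = 1"

definition margX :: "nat \<Rightarrow> (nat \<Rightarrow> nat \<Rightarrow> real) \<Rightarrow> nat \<Rightarrow> real" where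
  "margX n P x = (\<Sum>y<n. P x y)"

definition margY :: "nat \<Rightarrow> (nat \<Rightarrow> nat \<Rightarrow> real) \<Rightarrow> nat \<Rightarrow> real" where
  "margY m P y = (\<Sum>x<m. P x y)"

text \<open>f_X(x) = P_{Y|X=x}, as a function on Y (zero outside {0..<n}).\<close>
definition condY :: "nat \<Rightarrow> (nat \<Rightarrow> nat \<Rightarrow> real) \<Rightarrow> nat \<Rightarrow> (nat \<Rightarrow> real)" where
  "condY n P x = (\<lambda>y. if y < n then P x y / margX n P x else 0)"

definition eta :: "real \<Rightarrow> real" where
  "eta t = (if t \<le> 0 then 0 else - t * log 2 t)"

text \<open>Support of P_X and the values of the dependent part X\<searrow>Y = f_X(X).\<close>
definition suppX :: "nat \<Rightarrow> nat \<Rightarrow> (nat \<Rightarrow> nat \<Rightarrow> real) \<Rightarrow> nat list" where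
  "suppX m n P = filter (\<lambda>x. 0 < margX n P x) [0..<m]"

definition dep_values :: "nat \<Rightarrow> nat \<Rightarrow> (nat \<Rightarrow> nat \<Rightarrow> real) \<Rightarrow> (nat \<Rightarrow> real) list" where
  "dep_values m n P = remdups (map (condY n P) (suppX m n P))"

definition dep_joint :: "nat \<Rightarrow> nat \<Rightarrow> (nat \<Rightarrow> nat \<Rightarrow> real) \<Rightarrow> (nat \<Rightarrow> real) \<Rightarrow> nat \<Rightarrow> real" where
  "dep_joint m n P z y = (\<Sum>x\<in>set (suppX m n P). if condY n P x = z then P x y else 0)"

text \<open>Shannon conditional entropy H(X\<searrow>Y | Y) = H(X\<searrow>Y, Y) - H(Y), base 2.\<close>
definition dep_cond_entropy :: "nat \<Rightarrow> nat \<Rightarrow> (nat \<Rightarrow> nat \<Rightarrow> real) \<Rightarrow> real" where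
  "dep_cond_entropy m n P =
     (\<Sum>z\<in>set (dep_values m n P). \<Sum>y<n. eta (dep_joint m n P z y)) - (\<Sum>y<n. eta (margY m P y))"

definition transp_prim :: "(nat \<Rightarrow> nat \<Rightarrow> real) \<Rightarrow> (nat \<Rightarrow> nat \<Rightarrow> real)" where
  "transp_prim P = (\<lambda>y x. P x y)"

definition nontrivial_primitive :: "nat \<Rightarrow> nat \<Rightarrow> (nat \<Rightarrow> nat \<Rightarrow> real) \<Rightarrow> bool" where
  "nontrivial_primitive m n P \<longleftrightarrow> dep_cond_entropy m n P \<noteq> 0"

text \<open>Applied to positive semidefinite matrices
  (possibly unnormalised), whose eigenvalues are real and nonnegative.\<close>
definition vN_entropy :: "complex mat \<Rightarrow> real" where
  "vN_entropy A = (\<Sum>a\<in>{a. poly (char_poly A) a = 0}.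
      real (order a (char_poly A)) * eta (Re a))"

text \<open>Regular embedding in H_A \<otimes> H_B, basis |x>|y> has index x*n+y.\<close>
definition regular_embedding :: "nat \<Rightarrow> nat \<Rightarrow> (nat \<Rightarrow> nat \<Rightarrow> real) \<Rightarrow> (nat \<Rightarrow> nat \<Rightarrow> real) \<Rightarrow> complex vec" where
  "regular_embedding m n P \<theta> =
     vec (m * n) (\<lambda>i. cis (\<theta> (i div n) (i mod n)) * complex_of_real (sqrt (P (i div n) (i mod n))))"

definition canonical_embedding :: "nat \<Rightarrow> nat \<Rightarrow> (nat \<Rightarrow> nat \<Rightarrow> real) \<Rightarrow> complex vec" where
  "canonical_embedding m n P = regular_embedding m n P (\<lambda>x y. 0)"

text \<open>Given amplitudes a u v = <u|<v|psi> (u: measured register of size m,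
  v: kept register of size n) and a function g of the measurement outcome,
  the cq-state of (g(U), V) after measuring the first register, and the
  reduced state of V.  Outcomes u outside the support list are omitted
  (their post-measurement states are zero).\<close>
definition cq_block :: "nat \<Rightarrow> nat \<Rightarrow> (nat \<Rightarrow> nat \<Rightarrow> complex) \<Rightarrow> nat list \<Rightarrow> (nat \<Rightarrow> 'z) \<Rightarrow> 'z \<Rightarrow> complex mat" where
  "cq_block m n a us g z = mat n n (\<lambda>(v, v').
     (\<Sum>u\<in>set us. if g u = z then a u v * cnj (a u v') else 0))"

definition cq_state :: "nat \<Rightarrow> nat \<Rightarrow> (nat \<Rightarrow> nat \<Rightarrow> complex) \<Rightarrow> nat list \<Rightarrow> (nat \<Rightarrow> 'z) \<Rightarrow> complex mat" where
  "cq_state m n a us g =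
     (let zs = remdups (map g us); k = length zs in
      mat (k * n) (k * n) (\<lambda>(i, j).
        if i div n = j div n then cq_block m n a us g (zs ! (i div n)) $$ (i mod n, j mod n) else 0))"

definition reduced_state :: "nat \<Rightarrow> nat \<Rightarrow> (nat \<Rightarrow> nat \<Rightarrow> complex) \<Rightarrow> complex mat" where
  "reduced_state m n a = mat n n (\<lambda>(v, v'). \<Sum>u<m. a u v * cnj (a u v'))"

definition cq_cond_entropy :: "nat \<Rightarrow> nat \<Rightarrow> (nat \<Rightarrow> nat \<Rightarrow> complex) \<Rightarrow> nat list \<Rightarrow> (nat \<Rightarrow> 'z) \<Rightarrow> real" where
  "cq_cond_entropy m n a us g = vN_entropy (cq_state m n a us g) - vN_entropy (reduced_state m n a)"

definition S_XY_B :: "nat \<Rightarrow> nat \<Rightarrow> (nat \<Rightarrow> nat \<Rightarrow> real) \<Rightarrow> complex vec \<Rightarrow> real" where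
  "S_XY_B m n P \<psi> = cq_cond_entropy m n (\<lambda>x y. \<psi> $ (x * n + y)) (suppX m n P) (condY n P)"

definition S_YX_A :: "nat \<Rightarrow> nat \<Rightarrow> (nat \<Rightarrow> nat \<Rightarrow> real) \<Rightarrow> complex vec \<Rightarrow> real" where
  "S_YX_A m n P \<psi> = cq_cond_entropy n m (\<lambda>y x. \<psi> $ (x * n + y))
      (suppX n m (transp_prim P)) (condY m (transp_prim P))"

end

theory Submission
  imports Defs "Jordan_Normal_Form.Schur_Decomposition"
begin

text \<open>
  Write \<open>\<phi>\<^sub>x = \<Sum>\<^sub>y \<surd>P(x,y) |y\<rangle>\<close>. Measuring \<open>A\<close> in the canonical embedding and computing
  \<open>X\<searrow>Y\<close> leaves a block-diagonal state whose blocks are the frame operators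
  \<open>B\<^sub>z = \<Sum>{|\<phi>\<^sub>x\<rangle>\<langle>\<phi>\<^sub>x| | f\<^sub>X(x) = z}\<close>, while the reduced state of \<open>B\<close> is \<open>\<Sum>\<^sub>z B\<^sub>z\<close>; so
  \<open>S(X\<searrow>Y|B) = \<Sum>\<^sub>z S(B\<^sub>z) - S(\<Sum>\<^sub>z B\<^sub>z)\<close>. Expanding eigenvectors of the blocks in an
  eigenbasis of the sum shows that the eigenvalues of the sum are averages of those of the
  blocks with doubly substochastic weights, so convexity of \<open>t log t\<close> makes the difference
  nonnegative, and it vanishes only if vectors from different blocks are orthogonal. As the
  \<open>\<phi>\<^sub>x\<close> have nonnegative entries, \<open>\<phi>\<^sub>x \<perp> \<phi>\<^sub>x'\<close> means that \<open>x\<close> and \<open>x'\<close> never produce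
  the same \<open>y\<close>; then \<open>f\<^sub>X\<close> is a function of \<open>Y\<close> on the support and \<open>H(X\<searrow>Y|Y) = 0\<close>. For
  \<open>S(Y\<searrow>X|A)\<close> the same argument for the transposed primitive makes columns that share a
  row proportional, which again forces \<open>H(X\<searrow>Y|Y) = 0\<close>.
\<close>


section \<open>Inner products and orthonormal bases\<close>

lemma cnj_mult_self: "cnj z * z = of_real ((cmod z)\<^sup>2)"
  by (metis complex_norm_square mult.commute)

definition inner_on :: "'a set \<Rightarrow> ('a \<Rightarrow> complex) \<Rightarrow> ('a \<Rightarrow> complex) \<Rightarrow> complex" where
  "inner_on S x y = (\<Sum>v\<in>S. cnj (x v) * y v)"

text \<open>Vectors of \<open>\<complex>\<^sup>n\<close> are functions \<open>nat \<Rightarrow> complex\<close> of which only the values below \<open>n\<close> matter.\<close>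

abbreviation cinner :: "nat \<Rightarrow> (nat \<Rightarrow> complex) \<Rightarrow> (nat \<Rightarrow> complex) \<Rightarrow> complex" where
  "cinner n \<equiv> inner_on {..<n}"

lemma inner_on_commute: "inner_on S y x = cnj (inner_on S x y)"
  unfolding inner_on_def by (simp add: mult.commute)

lemma inner_on_self: "inner_on S x x = of_real (\<Sum>v\<in>S. (cmod (x v))\<^sup>2)"
  unfolding inner_on_def of_real_sum by (simp add: cnj_mult_self)

lemma inner_on_cong:
  "(\<And>v. v \<in> S \<Longrightarrow> x v = x' v) \<Longrightarrow> (\<And>v. v \<in> S \<Longrightarrow> y v = y' v) \<Longrightarrow> inner_on S x y = inner_on S x' y'"
  unfolding inner_on_def by (intro sum.cong) auto

lemma inner_on_sum_left:
  "inner_on S (\<lambda>v. \<Sum>j\<in>J. c j * g j v) y = (\<Sum>j\<in>J. cnj (c j) * inner_on S (g j) y)"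
  unfolding inner_on_def by (simp add: sum_distrib_left sum_distrib_right sum.swap[of _ S] mult_ac)

lemma inner_on_sum_right:
  "inner_on S x (\<lambda>v. \<Sum>j\<in>J. c j * g j v) = (\<Sum>j\<in>J. c j * inner_on S x (g j))"
  unfolding inner_on_def by (simp add: sum_distrib_left sum_distrib_right sum.swap[of _ S] mult_ac)

lemma inner_on_scale_left: "inner_on S (\<lambda>v. c * x v) y = cnj c * inner_on S x y"
  unfolding inner_on_def by (simp add: sum_distrib_left mult.assoc)

lemma inner_on_scale_right: "inner_on S x (\<lambda>v. c * y v) = c * inner_on S x y"
  unfolding inner_on_def by (simp add: sum_distrib_left mult.left_commute)

lemma inner_on_diff:
  "inner_on S (\<lambda>v. x v - x' v) (\<lambda>v. y v - y' v)
     = inner_on S x y - inner_on S x y' - inner_on S x' y + inner_on S x' y'"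
  unfolding inner_on_def by (simp add: sum_subtractf[symmetric] sum.distrib[symmetric] algebra_simps)

definition orthonormal :: "nat \<Rightarrow> nat \<Rightarrow> (nat \<Rightarrow> nat \<Rightarrow> complex) \<Rightarrow> bool" where
  "orthonormal k n u \<longleftrightarrow> (\<forall>i<k. \<forall>j<k. cinner n (u i) (u j) = (if i = j then 1 else 0))"

abbreviation orthonormal_basis :: "nat \<Rightarrow> (nat \<Rightarrow> nat \<Rightarrow> complex) \<Rightarrow> bool" where
  "orthonormal_basis n e \<equiv> orthonormal n n e"

definition basis_mat :: "nat \<Rightarrow> (nat \<Rightarrow> nat \<Rightarrow> complex) \<Rightarrow> complex mat" where
  "basis_mat n e = mat n n (\<lambda>(v, j). e j v)"

definition basis_adj :: "nat \<Rightarrow> (nat \<Rightarrow> nat \<Rightarrow> complex) \<Rightarrow> complex mat" where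
  "basis_adj n e = mat n n (\<lambda>(j, v). cnj (e j v))"

lemma basis_mat_carrier [simp]: "basis_mat n e \<in> carrier_mat n n"
  and basis_adj_carrier [simp]: "basis_adj n e \<in> carrier_mat n n"
  unfolding basis_mat_def basis_adj_def by auto

lemma basis_adj_mult_basis_mat:
  assumes "orthonormal_basis n e"
  shows "basis_adj n e * basis_mat n e = 1\<^sub>m n"
proof (rule eq_matI)
  fix i j assume "i < dim_row (1\<^sub>m n)" "j < dim_col (1\<^sub>m n)"
  then show "(basis_adj n e * basis_mat n e) $$ (i, j) = 1\<^sub>m n $$ (i, j)"
    using assms by (simp add: basis_adj_def basis_mat_def orthonormal_def inner_on_def
        scalar_prod_def lessThan_atLeast0)
qed (simp_all add: basis_adj_def basis_mat_def)

lemma basis_mat_mult_basis_adj: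
  assumes "orthonormal_basis n e"
  shows "basis_mat n e * basis_adj n e = 1\<^sub>m n"
  by (rule mat_mult_left_right_inverse[OF _ _ basis_adj_mult_basis_mat[OF assms]]) simp_all

lemma orthonormal_basis_complete:
  assumes "orthonormal_basis n e" "v < n" "v' < n"
  shows "(\<Sum>j<n. e j v * cnj (e j v')) = (if v = v' then 1 else 0)"
proof -
  have "(basis_mat n e * basis_adj n e) $$ (v, v') = 1\<^sub>m n $$ (v, v')"
    by (simp add: basis_mat_mult_basis_adj[OF assms(1)])
  then show ?thesis
    using assms(2,3) by (simp add: basis_mat_def basis_adj_def scalar_prod_def lessThan_atLeast0)
qed

lemma cinner_expand_basis:
  assumes "orthonormal_basis n e"
  shows "cinner n x y = (\<Sum>j<n. cinner n x (e j) * cinner n (e j) y)"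
proof -
  have "(\<Sum>j<n. cinner n x (e j) * cinner n (e j) y)
      = (\<Sum>j<n. \<Sum>v<n. \<Sum>v'<n. cnj (x v) * y v' * (e j v * cnj (e j v')))"
    unfolding inner_on_def sum_product by (intro sum.cong refl) (simp add: mult_ac)
  also have "\<dots> = (\<Sum>v<n. \<Sum>v'<n. cnj (x v) * y v' * (\<Sum>j<n. e j v * cnj (e j v')))"
    by (subst sum.swap, subst sum.swap) (simp add: sum_distrib_left)
  also have "\<dots> = (\<Sum>v<n. \<Sum>v'<n. if v = v' then cnj (x v) * y v' else 0)"
    by (intro sum.cong refl) (simp add: orthonormal_basis_complete[OF assms])
  finally show ?thesis by (simp add: inner_on_def)
qed

lemma cinner_self_expand_basis:
  assumes "orthonormal_basis n e"
  shows "cinner n x x = of_real (\<Sum>j<n. (cmod (cinner n (e j) x))\<^sup>2)"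
  unfolding cinner_expand_basis[OF assms, of x x] of_real_sum
  by (intro sum.cong refl) (metis inner_on_commute complex_norm_square mult.commute)

section \<open>Eigenbases and the spectral theorem\<close>

definition eigenbasis :: "nat \<Rightarrow> complex mat \<Rightarrow> (nat \<Rightarrow> nat \<Rightarrow> complex) \<Rightarrow> (nat \<Rightarrow> real) \<Rightarrow> bool" where
  "eigenbasis n A e d \<longleftrightarrow> orthonormal_basis n e \<and>
     (\<forall>j<n. \<forall>v<n. (\<Sum>v'<n. A $$ (v, v') * e j v') = of_real (d j) * e j v)"

lemma char_poly_eigenbasis:
  assumes A: "A \<in> carrier_mat n n" and eb: "eigenbasis n A e d"
  shows "char_poly A = (\<Prod>j<n. [:- of_real (d j), 1:])"
proof -
  let ?U = "basis_mat n e" and ?Uh = "basis_adj n e"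
  define D where "D = mat n n (\<lambda>(i, j). if i = j then complex_of_real (d i) else 0)"
  have D: "D \<in> carrier_mat n n" unfolding D_def by simp
  have o: "orthonormal_basis n e" using eb unfolding eigenbasis_def by simp
  have AU: "A * ?U = ?U * D"
  proof (rule eq_matI)
    fix i j assume "i < dim_row (?U * D)" "j < dim_col (?U * D)"
    then have ij: "i < n" "j < n" using D by (auto simp: basis_mat_def)
    have "(A * ?U) $$ (i, j) = (\<Sum>v'<n. A $$ (i, v') * e j v')"
      using ij A by (simp add: basis_mat_def scalar_prod_def lessThan_atLeast0)
    also have "\<dots> = of_real (d j) * e j i"
      using eb ij by (simp add: eigenbasis_def)
    also have "\<dots> = (\<Sum>k<n. e k i * (if k = j then of_real (d k) else 0))"
      using ij by (simp add: if_distrib mult.commute cong: if_cong)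
    also have "\<dots> = (?U * D) $$ (i, j)"
      using ij by (simp add: basis_mat_def D_def scalar_prod_def lessThan_atLeast0)
    finally show "(A * ?U) $$ (i, j) = (?U * D) $$ (i, j)" .
  qed (use A D in \<open>auto simp: basis_mat_def\<close>)
  have "A = A * (?U * ?Uh)" using A by (simp add: basis_mat_mult_basis_adj[OF o])
  also have "\<dots> = (A * ?U) * ?Uh" by (rule assoc_mult_mat[symmetric, OF A basis_mat_carrier basis_adj_carrier])
  also have "\<dots> = ?U * D * ?Uh" unfolding AU ..
  finally have "similar_mat A D"
    using A D basis_mat_mult_basis_adj[OF o] basis_adj_mult_basis_mat[OF o]
    by (intro similar_matI[of A D ?U ?Uh n]) auto
  then have "char_poly A = char_poly D" by (rule char_poly_similar)
  also have "\<dots> = (\<Prod>a\<leftarrow>diag_mat D. [:- a, 1:])"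
    by (rule char_poly_upper_triangular[OF D]) (auto simp: D_def upper_triangular_def)
  also have "diag_mat D = map (\<lambda>j. complex_of_real (d j)) [0..<n]"
    unfolding diag_mat_def D_def by (auto intro: nth_equalityI)
  finally show ?thesis
    by (simp add: prod.distinct_set_conv_list[symmetric] lessThan_atLeast0)
qed

lemma order_prod_linear_factors:
  assumes "finite J"
  shows "Polynomial.order a (\<Prod>j\<in>J. [:- d j, 1:]) = card {j\<in>J. d j = (a::complex)}"
  using assms
proof (induction J rule: finite_induct)
  case empty
  then show ?case by (simp add: order_0I)
next
  case (insert x F)
  have "(\<Prod>j\<in>F. [:- d j, 1:]) \<noteq> 0" by (simp add: insert.hyps(1))
  then have "[:- d x, 1:] * (\<Prod>j\<in>F. [:- d j, 1:]) \<noteq> 0"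
    by (metis mult_eq_0_iff pCons_eq_0_iff one_neq_zero)
  then have "Polynomial.order a (\<Prod>j\<in>insert x F. [:- d j, 1:])
      = Polynomial.order a [:- d x, 1:] + Polynomial.order a (\<Prod>j\<in>F. [:- d j, 1:])"
    unfolding prod.insert[OF insert.hyps] by (rule order_mult)
  also have "\<dots> = (if d x = a then 1 else 0) + card {j\<in>F. d j = a}"
    using insert.IH by (simp add: order_linear')
  also have "\<dots> = card {j\<in>insert x F. d j = a}"
  proof -
    have "{j\<in>insert x F. d j = a} = (if d x = a then insert x {j\<in>F. d j = a} else {j\<in>F. d j = a})"
      by auto
    then show ?thesis using insert.hyps by auto
  qed
  finally show ?case .
qed

lemma vN_entropy_eigenbasis:
  assumes "A \<in> carrier_mat n n" "eigenbasis n A e d"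
  shows "vN_entropy A = (\<Sum>j<n. eta (d j))"
proof -
  let ?d = "\<lambda>j. complex_of_real (d j)"
  have roots: "{a. poly (\<Prod>j<n. [:- ?d j, 1:]) a = 0} = ?d ` {..<n}"
    by (auto simp: poly_prod image_iff)
  have "vN_entropy A = (\<Sum>a\<in>?d ` {..<n}. real (card {j\<in>{..<n}. ?d j = a}) * eta (Re a))"
    unfolding vN_entropy_def char_poly_eigenbasis[OF assms] roots
    by (simp add: order_prod_linear_factors)
  also have "\<dots> = (\<Sum>a\<in>?d ` {..<n}. \<Sum>j\<in>{j\<in>{..<n}. ?d j = a}. eta (d j))"
    by (rule sum.cong) auto
  also have "\<dots> = (\<Sum>j<n. eta (d j))"
    by (rule sum.image_gen[symmetric]) auto
  finally show ?thesis .
qed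

lemma cinner_projection_residual:
  assumes orth: "orthonormal k n u" and l: "l < k"
  shows "cinner n (u l) (\<lambda>v. p v - (\<Sum>l'<k. cinner n (u l') p * u l' v)) = 0"
proof -
  have "cinner n (u l) (\<lambda>v. p v - (\<Sum>l'<k. cinner n (u l') p * u l' v))
      = cinner n (u l) p - (\<Sum>l'<k. cinner n (u l') p * cinner n (u l) (u l'))"
    unfolding inner_on_def
    by (simp add: sum_subtractf right_diff_distrib sum_distrib_left algebra_simps sum.swap[of _ "{..<k}"])
  also have "(\<Sum>l'<k. cinner n (u l') p * cinner n (u l) (u l'))
      = (\<Sum>l'<k. if l' = l then cinner n (u l') p else 0)"
    by (rule sum.cong) (use orth l in \<open>auto simp: orthonormal_def\<close>)
  finally show ?thesis using l by simp
qed

lemma gram_schmidt_step: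
  fixes p :: "nat \<Rightarrow> complex"
  assumes orth: "orthonormal k n u"
    and w: "w = (\<lambda>v. p v - (\<Sum>l<k. cinner n (u l) p * u l v))"
    and nz: "v0 < n" "w v0 \<noteq> 0"
  obtains r :: real where "r > 0"
    and "orthonormal (Suc k) n (u(k := (\<lambda>v. of_real (inverse r) * w v)))"
proof
  define r where "r = sqrt (\<Sum>v<n. (cmod (w v))\<^sup>2)"
  have "0 < (cmod (w v0))\<^sup>2" using nz by simp
  also have "\<dots> \<le> (\<Sum>v<n. (cmod (w v))\<^sup>2)" by (rule member_le_sum) (use nz in auto)
  finally show r: "r > 0" unfolding r_def by simp
  have ww: "cinner n w w = of_real (r\<^sup>2)"
    unfolding inner_on_self r_def by (simp add: sum_nonneg)
  have uw: "cinner n (u l) w = 0" if "l < k" for l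
    unfolding w by (rule cinner_projection_residual[OF orth that])
  let ?u' = "u(k := (\<lambda>v. of_real (inverse r) * w v))"
  show "orthonormal (Suc k) n ?u'"
    unfolding orthonormal_def
  proof (intro allI impI)
    fix i j assume "i < Suc k" "j < Suc k"
    then consider "i = k" "j = k" | "i = k" "j < k" | "i < k" "j = k" | "i < k" "j < k"
      by linarith
    then show "cinner n (?u' i) (?u' j) = (if i = j then 1 else 0)"
    proof cases
      case 1
      have inv: "inverse r * inverse r * r\<^sup>2 = 1" using r by (simp add: power2_eq_square field_simps)
      have "cinner n (\<lambda>v. of_real (inverse r) * w v) (\<lambda>v. of_real (inverse r) * w v)
          = of_real (inverse r * inverse r * r\<^sup>2)"
        by (simp add: inner_on_scale_left inner_on_scale_right ww)
      then show ?thesis using 1 by (simp only: inv) simp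
    next
      case 2
      then show ?thesis using uw[of j] inner_on_commute[of "{..<n}" w "u j"]
        by (simp add: inner_on_scale_left)
    next
      case 3
      then show ?thesis using uw[of i] by (simp add: inner_on_scale_right)
    next
      case 4
      then show ?thesis using orth by (simp add: orthonormal_def)
    qed
  qed
qed

lemma sum_triangle_swap:
  fixes f :: "nat \<Rightarrow> nat \<Rightarrow> 'a::comm_monoid_add"
  shows "(\<Sum>l<k. \<Sum>l'\<le>l. f l l') = (\<Sum>l'<k. \<Sum>l\<in>{l'..<k}. f l l')"
proof -
  have "(\<Sum>l'\<le>l. f l l') = (\<Sum>l'<k. if l' \<le> l then f l l' else 0)" if "l < k" for l
  proof -
    have "{..l} = {l'\<in>{..<k}. l' \<le> l}" using that by auto
    then show ?thesis by (simp only:) (rule sum.inter_filter, simp)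
  qed
  then have "(\<Sum>l<k. \<Sum>l'\<le>l. f l l') = (\<Sum>l<k. \<Sum>l'<k. if l' \<le> l then f l l' else 0)"
    by simp
  also have "\<dots> = (\<Sum>l'<k. \<Sum>l<k. if l' \<le> l then f l l' else 0)" by (rule sum.swap)
  also have "\<dots> = (\<Sum>l'<k. \<Sum>l\<in>{l'..<k}. f l l')"
  proof (rule sum.cong[OF refl])
    fix l' assume "l' \<in> {..<k}"
    have "{l'..<k} = {l\<in>{..<k}. l' \<le> l}" by auto
    then show "(\<Sum>l<k. if l' \<le> l then f l l' else 0) = (\<Sum>l\<in>{l'..<k}. f l l')"
      by (simp only:) (rule sum.inter_filter[symmetric], simp)
  qed
  finally show ?thesis .
qed

lemma projection_in_span:
  fixes u :: "nat \<Rightarrow> nat \<Rightarrow> complex" and k :: nat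
  assumes "\<forall>j<k. \<forall>v<n. u j v = (\<Sum>l\<le>j. C l j * p l v)"
  obtains b where "\<And>v. v < n \<Longrightarrow> (\<Sum>l<k. cinner n (u l) q * u l v) = (\<Sum>l<k. b l * p l v)"
proof
  fix v assume v: "v < n"
  have "(\<Sum>l<k. cinner n (u l) q * u l v) = (\<Sum>l<k. \<Sum>l'\<le>l. cinner n (u l) q * C l' l * p l' v)"
    using assms v by (simp add: sum_distrib_left mult.assoc)
  also have "\<dots> = (\<Sum>l'<k. \<Sum>l\<in>{l'..<k}. cinner n (u l) q * C l' l * p l' v)"
    by (rule sum_triangle_swap)
  finally show "(\<Sum>l<k. cinner n (u l) q * u l v)
      = (\<Sum>l'<k. (\<Sum>l\<in>{l'..<k}. cinner n (u l) q * C l' l) * p l' v)"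
    by (simp add: sum_distrib_right)
qed

lemma independent_not_combination:
  fixes p :: "nat \<Rightarrow> nat \<Rightarrow> complex"
  assumes indep: "\<And>c. \<forall>v<n. (\<Sum>j<n. c j * p j v) = 0 \<Longrightarrow> \<forall>j<n. c j = 0" and k: "k < n"
  obtains v where "v < n" "p k v - (\<Sum>l<k. b l * p l v) \<noteq> 0"
proof -
  have "\<exists>v<n. p k v - (\<Sum>l<k. b l * p l v) \<noteq> 0"
  proof (rule ccontr)
    assume "\<not> ?thesis"
    then have comb: "p k v - (\<Sum>l<k. b l * p l v) = 0" if "v < n" for v
      using that by blast
    define c where "c j = (if j < k then - b j else if j = k then 1 else 0)" for j
    have "\<forall>v<n. (\<Sum>j<n. c j * p j v) = 0"
    proof (intro allI impI)
      fix v assume v: "v < n"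
      have split: "{..<n} = {..<k} \<union> {k} \<union> {Suc k..<n}" using k by auto
      have "(\<Sum>j<n. c j * p j v)
          = (\<Sum>j<k. c j * p j v) + c k * p k v + (\<Sum>j\<in>{Suc k..<n}. c j * p j v)"
        unfolding split by (subst sum.union_disjoint, auto)+
      also have "\<dots> = p k v - (\<Sum>l<k. b l * p l v)"
        unfolding c_def by (simp add: sum_negf)
      finally show "(\<Sum>j<n. c j * p j v) = 0" using comb[OF v] by simp
    qed
    from indep[OF this] k show False by (auto simp: c_def)
  qed
  then show thesis using that by blast
qed

lemma triangular_combination_extend:
  assumes "\<forall>j<k. \<forall>v<n. u j v = (\<Sum>l\<le>j. C l j * p l v)"
    and "\<And>v. v < n \<Longrightarrow> q v = (\<Sum>l<k. b l * p l v) + c * p k v"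
  shows "\<exists>C'. \<forall>j<Suc k. \<forall>v<n. (u(k := q)) j v = (\<Sum>l\<le>j. C' l j * p l v)"
proof (intro exI allI impI)
  fix j v assume j: "j < Suc k" and v: "v < n"
  let ?C' = "\<lambda>l j. if j = k then (if l = k then c else b l) else C l j"
  show "(u(k := q)) j v = (\<Sum>l\<le>j. ?C' l j * p l v)"
  proof (cases "j = k")
    case True
    then show ?thesis using assms(2)[OF v] by (simp add: lessThan_Suc_atMost[symmetric])
  next
    case False
    with j assms(1) v show ?thesis by simp
  qed
qed

lemma gram_schmidt_triangular:
  fixes p :: "nat \<Rightarrow> nat \<Rightarrow> complex"
  assumes indep: "\<And>c. \<forall>v<n. (\<Sum>j<n. c j * p j v) = 0 \<Longrightarrow> \<forall>j<n. c j = 0"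
  shows "k \<le> n \<Longrightarrow> \<exists>u C D. orthonormal k n u
     \<and> (\<forall>j<k. \<forall>v<n. u j v = (\<Sum>l\<le>j. C l j * p l v))
     \<and> (\<forall>j<k. \<forall>v<n. p j v = (\<Sum>l\<le>j. D l j * u l v))"
proof (induction k)
  case 0
  then show ?case by (auto simp: orthonormal_def)
next
  case (Suc k)
  then have k: "k < n" by simp
  from Suc.IH[OF less_imp_le[OF k]] obtain u C D where orth: "orthonormal k n u"
    and uC: "\<forall>j<k. \<forall>v<n. u j v = (\<Sum>l\<le>j. C l j * p l v)"
    and pD: "\<forall>j<k. \<forall>v<n. p j v = (\<Sum>l\<le>j. D l j * u l v)" by blast
  define a where "a l = cinner n (u l) (p k)" for l
  define w where "w v = p k v - (\<Sum>l<k. a l * u l v)" for v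
  obtain b where b: "\<And>v. v < n \<Longrightarrow> (\<Sum>l<k. a l * u l v) = (\<Sum>l<k. b l * p l v)"
    using projection_in_span[OF uC] unfolding a_def by blast
  obtain v0 where "v0 < n" "p k v0 - (\<Sum>l<k. b l * p l v0) \<noteq> 0"
    by (rule independent_not_combination[OF indep k])
  then have v0: "v0 < n" "w v0 \<noteq> 0" using b by (simp_all add: w_def)
  have "w = (\<lambda>v. p k v - (\<Sum>l<k. cinner n (u l) (p k) * u l v))"
    by (simp add: w_def a_def fun_eq_iff)
  from gram_schmidt_step[OF orth this v0] obtain r where r: "r > 0"
    and orth': "orthonormal (Suc k) n (u(k := (\<lambda>v. of_real (inverse r) * w v)))" .
  define c where "c = complex_of_real (inverse r)"
  define u' where "u' = u(k := (\<lambda>v. c * w v))"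
  have "\<exists>C'. \<forall>j<Suc k. \<forall>v<n. u' j v = (\<Sum>l\<le>j. C' l j * p l v)"
    unfolding u'_def
    by (rule triangular_combination_extend[OF uC, where b = "\<lambda>l. - c * b l" and c = c])
      (simp add: w_def b right_diff_distrib sum_distrib_left sum_negf mult.assoc)
  moreover have "\<exists>D'. \<forall>j<Suc k. \<forall>v<n. (p(k := p k)) j v = (\<Sum>l\<le>j. D' l j * u' l v)"
  proof (rule triangular_combination_extend[where b = a and c = "of_real r"])
    show "\<forall>j<k. \<forall>v<n. p j v = (\<Sum>l\<le>j. D l j * u' l v)"
      using pD by (auto simp: u'_def intro!: sum.cong)
    show "p k v = (\<Sum>l<k. a l * u' l v) + of_real r * u' k v" for v
      using r by (simp add: u'_def c_def w_def mult.assoc[symmetric])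
  qed
  ultimately show ?case using orth' unfolding c_def[symmetric] u'_def[symmetric] by auto
qed

lemma upper_triangular_mult:
  fixes X Y :: "'a::comm_ring_1 mat"
  assumes X: "X \<in> carrier_mat n n" and Y: "Y \<in> carrier_mat n n"
    and "upper_triangular X" "upper_triangular Y"
  shows "upper_triangular (X * Y)"
proof (rule upper_triangularI)
  fix i j assume j: "j < i" and "i < dim_row (X * Y)"
  then have i: "i < n" using X by simp
  have "X $$ (i, l) * Y $$ (l, j) = 0" if "l < n" for l
  proof (cases "l < i")
    case True
    then show ?thesis using assms(3) i X by (auto simp: upper_triangular_def)
  next
    case False
    then show ?thesis using assms(4) j that Y by (auto simp: upper_triangular_def)
  qed
  then show "(X * Y) $$ (i, j) = 0"
    using i j X Y by (simp add: scalar_prod_def)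
qed

lemma mat_left_inverse_cols_independent:
  fixes P Q :: "'a::comm_ring_1 mat"
  assumes P: "P \<in> carrier_mat n n" and Q: "Q \<in> carrier_mat n n" and QP: "Q * P = 1\<^sub>m n"
    and comb: "\<forall>v<n. (\<Sum>j<n. c j * P $$ (v, j)) = 0"
  shows "\<forall>j<n. c j = 0"
proof -
  define x where "x = vec n c"
  have x: "x \<in> carrier_vec n" unfolding x_def by simp
  have Px: "P *\<^sub>v x = 0\<^sub>v n"
  proof (rule eq_vecI)
    fix v assume "v < dim_vec (0\<^sub>v n)"
    then show "(P *\<^sub>v x) $ v = 0\<^sub>v n $ v"
      using comb P by (simp add: x_def scalar_prod_def lessThan_atLeast0 mult.commute)
  qed (use P in simp)
  have "x = (Q * P) *\<^sub>v x" using QP x by simp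
  also have "\<dots> = Q *\<^sub>v (P *\<^sub>v x)" using Q P x by simp
  also have "\<dots> = 0\<^sub>v n" unfolding Px using Q by (intro eq_vecI) (auto simp: scalar_prod_def)
  finally show ?thesis unfolding x_def by (metis index_vec index_zero_vec(1))
qed

lemma sum_atMost_eq_sum_lessThan_if:
  fixes j n :: nat
  assumes "j < n"
  shows "(\<Sum>l\<le>j. f l) = (\<Sum>l<n. if l \<le> j then f l else (0::'a::comm_monoid_add))"
proof -
  have "{l\<in>{..<n}. l \<le> j} = {..j}" using assms by auto
  then show ?thesis by (simp add: sum.inter_filter[symmetric])
qed

definition upper_mat :: "nat \<Rightarrow> (nat \<Rightarrow> nat \<Rightarrow> 'a::zero) \<Rightarrow> 'a mat" where
  "upper_mat n C = mat n n (\<lambda>(l, j). if l \<le> j then C l j else 0)"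

lemma upper_mat_carrier: "upper_mat n C \<in> carrier_mat n n"
  and upper_triangular_upper_mat: "upper_triangular (upper_mat n C)"
  unfolding upper_mat_def upper_triangular_def by auto

lemma basis_mat_triangular_combination:
  assumes "\<forall>j<n. \<forall>v<n. u j v = (\<Sum>l\<le>j. C l j * p l v)"
  shows "basis_mat n u = basis_mat n p * upper_mat n C"
proof (rule eq_matI)
  fix v j assume "v < dim_row (basis_mat n p * upper_mat n C)" "j < dim_col (basis_mat n p * upper_mat n C)"
  then have vj: "v < n" "j < n" by (simp_all add: basis_mat_def upper_mat_def)
  have "(basis_mat n p * upper_mat n C) $$ (v, j) = (\<Sum>l<n. p l v * (if l \<le> j then C l j else 0))"
    using vj by (simp add: basis_mat_def upper_mat_def scalar_prod_def lessThan_atLeast0)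
  also have "\<dots> = (\<Sum>l\<le>j. C l j * p l v)"
    by (subst sum_atMost_eq_sum_lessThan_if[OF vj(2)]) (auto intro!: sum.cong)
  finally show "basis_mat n u $$ (v, j) = (basis_mat n p * upper_mat n C) $$ (v, j)"
    using assms vj by (simp add: basis_mat_def)
qed (simp_all add: basis_mat_def upper_mat_def)

text \<open>Schur triangularization with a unitary change of basis: triangularize \<open>A = P B P\<^sup>-\<^sup>1\<close>
  and orthonormalize the columns of \<open>P\<close>, which keeps the triangular shape.\<close>

lemma unitary_triangularization:
  fixes A :: "complex mat"
  assumes A: "A \<in> carrier_mat n n"
  obtains u H where "orthonormal_basis n u" "H \<in> carrier_mat n n" "upper_triangular H"
    "A * basis_mat n u = basis_mat n u * H"
proof -
  obtain es where "char_poly A = (\<Prod>a\<leftarrow>es. [:- a, 1:])" using char_poly_factorized[OF A] by blast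
  from schur_decomposition_exists[OF A this] obtain B where B: "B \<in> carrier_mat n n"
    and uB: "upper_triangular B" and sim: "similar_mat A B" by blast
  from similar_matD[OF sim] obtain n' P Q where
    PQ: "{A, B, P, Q} \<subseteq> carrier_mat n' n'" "P * Q = 1\<^sub>m n'" "Q * P = 1\<^sub>m n'" "A = P * B * Q"
    by blast
  have "n' = n" using PQ(1) A by auto
  with PQ have P: "P \<in> carrier_mat n n" and Q: "Q \<in> carrier_mat n n"
    and QP: "Q * P = 1\<^sub>m n" and AP: "A = P * B * Q" by auto
  define p where "p j v = P $$ (v, j)" for j v
  have P_eq: "P = basis_mat n p" using P by (auto simp: basis_mat_def p_def)
  have "\<forall>j<n. c j = 0" if "\<forall>v<n. (\<Sum>j<n. c j * p j v) = 0" for c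
    using mat_left_inverse_cols_independent[OF P Q QP] that unfolding p_def .
  from gram_schmidt_triangular[OF this order.refl] obtain u C D where orth: "orthonormal_basis n u"
    and uC: "\<forall>j<n. \<forall>v<n. u j v = (\<Sum>l\<le>j. C l j * p l v)"
    and pD: "\<forall>j<n. \<forall>v<n. p j v = (\<Sum>l\<le>j. D l j * u l v)"
    by blast
  have UPC: "basis_mat n u = P * upper_mat n C"
    unfolding P_eq by (rule basis_mat_triangular_combination[OF uC])
  have PUD: "P = basis_mat n u * upper_mat n D"
    unfolding P_eq by (rule basis_mat_triangular_combination[OF pD])
  let ?U = "basis_mat n u" and ?C = "upper_mat n C" and ?D = "upper_mat n D"
  note carriers = upper_mat_carrier[of n C] upper_mat_carrier[of n D] P B Q
  have "A * ?U = P * B * Q * (P * ?C)" by (simp only: AP UPC)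
  also have "\<dots> = P * B * ((Q * P) * ?C)"
    using carriers by (simp add: assoc_mult_mat[of _ n n _ n _ n])
  also have "\<dots> = ?U * ?D * B * ?C" using carriers by (simp add: QP PUD[symmetric])
  also have "\<dots> = ?U * (?D * B * ?C)"
    using carriers by (simp add: assoc_mult_mat[of _ n n _ n _ n])
  moreover have "upper_triangular (?D * B * ?C)"
    using carriers uB by (intro upper_triangular_mult[of _ n]) (simp_all add: upper_triangular_upper_mat)
  ultimately show thesis using carriers by (intro that[OF orth]) simp_all
qed

definition hermitian_mat :: "nat \<Rightarrow> complex mat \<Rightarrow> bool" where
  "hermitian_mat n A \<longleftrightarrow> (\<forall>i<n. \<forall>j<n. A $$ (i, j) = cnj (A $$ (j, i)))"

lemma hermitian_mat_basis_conj:
  assumes A: "A \<in> carrier_mat n n" and herm: "hermitian_mat n A"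
  shows "hermitian_mat n (basis_adj n u * A * basis_mat n u)"
  unfolding hermitian_mat_def
proof (intro allI impI)
  fix i j assume ij: "i < n" "j < n"
  have hA: "cnj (A $$ (v, l)) = A $$ (l, v)" if "v < n" "l < n" for v l
    using herm that unfolding hermitian_mat_def by metis
  have entry: "(basis_adj n u * A * basis_mat n u) $$ (i, j)
      = (\<Sum>l<n. \<Sum>v<n. cnj (u i v) * A $$ (v, l) * u j l)"
    if "i < n" "j < n" for i j
    using that A by (simp add: basis_mat_def basis_adj_def scalar_prod_def lessThan_atLeast0 sum_distrib_right)
  have "cnj ((basis_adj n u * A * basis_mat n u) $$ (j, i))
      = (\<Sum>l<n. \<Sum>v<n. u j v * A $$ (l, v) * cnj (u i l))"
    unfolding entry[OF ij(2,1)] by (simp add: hA)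
  also have "\<dots> = (basis_adj n u * A * basis_mat n u) $$ (i, j)"
    unfolding entry[OF ij] by (subst sum.swap) (simp add: mult_ac)
  finally show "(basis_adj n u * A * basis_mat n u) $$ (i, j) = cnj ((basis_adj n u * A * basis_mat n u) $$ (j, i))"
    by simp
qed

lemma hermitian_upper_triangular_diagonal:
  assumes H: "H \<in> carrier_mat n n" "upper_triangular H" "hermitian_mat n H"
    and ij: "i < n" "j < n" "i \<noteq> j"
  shows "H $$ (i, j) = 0"
proof (cases "j < i")
  case True
  then show ?thesis using H ij by (auto simp: upper_triangular_def)
next
  case False
  then have "H $$ (j, i) = 0" using H ij by (auto simp: upper_triangular_def)
  moreover have "H $$ (i, j) = cnj (H $$ (j, i))" using H(3) ij unfolding hermitian_mat_def by blast
  ultimately show ?thesis by simp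
qed

lemma hermitian_eigenbasis:
  assumes A: "A \<in> carrier_mat n n" and herm: "hermitian_mat n A"
  obtains e d where "eigenbasis n A e d"
proof -
  obtain u H where o: "orthonormal_basis n u" and H: "H \<in> carrier_mat n n"
    and uH: "upper_triangular H" and AU: "A * basis_mat n u = basis_mat n u * H"
    by (rule unitary_triangularization[OF A])
  let ?U = "basis_mat n u" and ?Uh = "basis_adj n u"
  have "H = (?Uh * ?U) * H" using H by (simp add: basis_adj_mult_basis_mat[OF o])
  also have "\<dots> = ?Uh * (A * ?U)"
    by (simp only: assoc_mult_mat[OF basis_adj_carrier basis_mat_carrier H] AU)
  also have "\<dots> = ?Uh * A * ?U" by (rule assoc_mult_mat[symmetric, OF basis_adj_carrier A basis_mat_carrier])
  finally have herm_H: "hermitian_mat n H" using hermitian_mat_basis_conj[OF A herm] by simp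
  have "eigenbasis n A u (\<lambda>j. Re (H $$ (j, j)))"
    unfolding eigenbasis_def
  proof (intro conjI o allI impI)
    fix j v assume j: "j < n" and v: "v < n"
    have "(\<Sum>v'<n. A $$ (v, v') * u j v') = (A * ?U) $$ (v, j)"
      using j v A by (simp add: basis_mat_def scalar_prod_def lessThan_atLeast0)
    also have "\<dots> = (?U * H) $$ (v, j)" by (simp only: AU)
    also have "\<dots> = (\<Sum>l<n. u l v * H $$ (l, j))"
      using j v H by (simp add: basis_mat_def scalar_prod_def lessThan_atLeast0)
    also have "\<dots> = (\<Sum>l<n. if l = j then u j v * H $$ (j, j) else 0)"
      by (rule sum.cong) (use hermitian_upper_triangular_diagonal[OF H uH herm_H _ j] in auto)
    finally have "(\<Sum>v'<n. A $$ (v, v') * u j v') = H $$ (j, j) * u j v"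
      using j by (simp add: mult.commute)
    moreover have "H $$ (j, j) = of_real (Re (H $$ (j, j)))"
      using herm_H j unfolding hermitian_mat_def by (metis Reals_cnj_iff complex_is_Real_iff of_real_Re)
    ultimately show "(\<Sum>v'<n. A $$ (v, v') * u j v') = of_real (Re (H $$ (j, j))) * u j v"
      by simp
  qed
  then show thesis by (rule that)
qed

section \<open>Frame operators and their refinement by a partition\<close>

definition frame_op :: "nat \<Rightarrow> ('x \<Rightarrow> nat \<Rightarrow> complex) \<Rightarrow> 'x set \<Rightarrow> (nat \<Rightarrow> complex) \<Rightarrow> nat \<Rightarrow> complex" where
  "frame_op n \<phi> T y v = (\<Sum>x\<in>T. cinner n (\<phi> x) y * \<phi> x v)"

definition frame_mat :: "nat \<Rightarrow> ('x \<Rightarrow> nat \<Rightarrow> complex) \<Rightarrow> 'x set \<Rightarrow> complex mat" where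
  "frame_mat n \<phi> T = mat n n (\<lambda>(v, v'). \<Sum>x\<in>T. \<phi> x v * cnj (\<phi> x v'))"

lemma frame_mat_carrier: "frame_mat n \<phi> T \<in> carrier_mat n n"
  unfolding frame_mat_def by simp

lemma frame_mat_apply:
  assumes "v < n"
  shows "(\<Sum>v'<n. frame_mat n \<phi> T $$ (v, v') * y v') = frame_op n \<phi> T y v"
proof -
  have "(\<Sum>v'<n. frame_mat n \<phi> T $$ (v, v') * y v') = (\<Sum>v'<n. \<Sum>x\<in>T. cnj (\<phi> x v') * y v' * \<phi> x v)"
    using assms by (simp add: frame_mat_def sum_distrib_left sum_distrib_right mult_ac)
  also have "\<dots> = frame_op n \<phi> T y v"
    unfolding frame_op_def inner_on_def by (subst sum.swap) (simp add: sum_distrib_right)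
  finally show ?thesis .
qed

lemma frame_mat_eigenbasis:
  obtains e d where "eigenbasis n (frame_mat n \<phi> T) e d"
proof -
  have "hermitian_mat n (frame_mat n \<phi> T)"
    by (auto simp: hermitian_mat_def frame_mat_def mult.commute)
  from hermitian_eigenbasis[OF frame_mat_carrier this] that show thesis by blast
qed

lemma cinner_frame_op_right:
  "cinner n y (frame_op n \<phi> T z) = (\<Sum>x\<in>T. cinner n y (\<phi> x) * cinner n (\<phi> x) z)"
  unfolding frame_op_def[abs_def] inner_on_sum_right by (simp add: mult.commute)

lemma cinner_frame_op_left:
  "cinner n (frame_op n \<phi> T y) z = (\<Sum>x\<in>T. cinner n y (\<phi> x) * cinner n (\<phi> x) z)"
  unfolding frame_op_def[abs_def] inner_on_sum_left by (simp add: inner_on_commute[of _ y])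

lemma cinner_frame_op_self:
  "cinner n y (frame_op n \<phi> T y) = of_real (\<Sum>x\<in>T. (cmod (cinner n (\<phi> x) y))\<^sup>2)"
  unfolding cinner_frame_op_right of_real_sum
  by (intro sum.cong refl) (metis complex_norm_square inner_on_commute mult.commute)

lemma cinner_frame_op_swap: "cinner n y (frame_op n \<phi> T z) = cinner n (frame_op n \<phi> T y) z"
  by (simp only: cinner_frame_op_left cinner_frame_op_right)

text \<open>The \<open>\<beta> j\<close> are orthogonal with squared norms \<open>l j\<close>; zero vectors are allowed, since
  their terms vanish as \<open>x / 0 = 0\<close>.\<close>

lemma bessel_inequality:
  fixes \<beta> :: "nat \<Rightarrow> 'x \<Rightarrow> complex" and l :: "nat \<Rightarrow> real"
  assumes orth: "\<And>j j'. j < n \<Longrightarrow> j' < n \<Longrightarrow>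
      inner_on S (\<beta> j) (\<beta> j') = (if j = j' then of_real (l j) else 0)"
  shows "(\<Sum>j<n. (cmod (inner_on S (\<beta> j) \<gamma>))\<^sup>2 / l j) \<le> Re (inner_on S \<gamma> \<gamma>)"
proof -
  define Q where "Q = (\<Sum>j<n. (cmod (inner_on S (\<beta> j) \<gamma>))\<^sup>2 / l j)"
  define \<kappa> where "\<kappa> j = inner_on S (\<beta> j) \<gamma> / of_real (l j)" for j
  define s where "s x = (\<Sum>j<n. \<kappa> j * \<beta> j x)" for x
  have s: "s = (\<lambda>x. \<Sum>j\<in>{..<n}. \<kappa> j * \<beta> j x)" unfolding s_def by simp
  have \<kappa>: "cnj (\<kappa> j) * inner_on S (\<beta> j) \<gamma> = of_real ((cmod (inner_on S (\<beta> j) \<gamma>))\<^sup>2 / l j)" for j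
  proof -
    have "cnj (\<kappa> j) * inner_on S (\<beta> j) \<gamma> = cnj (inner_on S (\<beta> j) \<gamma>) * inner_on S (\<beta> j) \<gamma> / of_real (l j)"
      by (simp add: \<kappa>_def)
    then show ?thesis by (simp only: cnj_mult_self of_real_divide)
  qed
  have sg: "inner_on S s \<gamma> = of_real Q"
    unfolding s inner_on_sum_left Q_def of_real_sum by (simp add: \<kappa>)
  have "inner_on S s s = (\<Sum>j<n. cnj (\<kappa> j) * (\<Sum>j'<n. \<kappa> j' * inner_on S (\<beta> j) (\<beta> j')))"
    unfolding s inner_on_sum_left inner_on_sum_right ..
  also have "\<dots> = (\<Sum>j<n. cnj (\<kappa> j) * (\<kappa> j * of_real (l j)))"
    by (intro sum.cong refl) (simp add: orth if_distrib cong: if_cong)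
  also have "\<dots> = (\<Sum>j<n. cnj (\<kappa> j) * inner_on S (\<beta> j) \<gamma>)"
    by (intro sum.cong refl) (auto simp: \<kappa>_def)
  also have "\<dots> = of_real Q" unfolding Q_def of_real_sum by (simp add: \<kappa>)
  finally have ss: "inner_on S s s = of_real Q" .
  have "0 \<le> Re (inner_on S (\<lambda>x. s x - \<gamma> x) (\<lambda>x. s x - \<gamma> x))"
    by (simp add: inner_on_self sum_nonneg)
  also have "\<dots> = Re (inner_on S \<gamma> \<gamma>) - Q"
    using sg by (simp add: inner_on_diff ss inner_on_commute[of S \<gamma> s])
  finally show ?thesis unfolding Q_def by simp
qed

definition xlnx :: "real \<Rightarrow> real" where
  "xlnx x = x * ln x"

definition bregman_xlnx :: "real \<Rightarrow> real \<Rightarrow> real" where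
  "bregman_xlnx l m = l * ln l - l * ln m - l + m"

lemma bregman_xlnx_nonneg:
  assumes "l \<ge> 0" "m > 0"
  shows "bregman_xlnx l m \<ge> 0"
proof (cases "l = 0")
  case True
  then show ?thesis using assms unfolding bregman_xlnx_def by simp
next
  case False
  with assms have l: "l > 0" by simp
  have "l * ln (m / l) \<le> l * (m / l - 1)"
    using ln_le_minus_one[of "m / l"] l assms(2) by (intro mult_left_mono) auto
  then show ?thesis using l assms(2) by (simp add: bregman_xlnx_def ln_div algebra_simps)
qed

lemma bregman_xlnx_eq_0:
  assumes "l > 0" "m > 0" "bregman_xlnx l m = 0"
  shows "l = m"
proof -
  have "l * ln (m / l) = l * (m / l - 1)"
    using assms by (simp add: bregman_xlnx_def ln_div algebra_simps)
  then have "ln (m / l) = m / l - 1" using assms(1) by simp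
  from ln_eq_minus_one[OF _ this] assms(1,2) have "m / l = 1" by simp
  then show ?thesis using assms(1) by simp
qed

lemma eta_eq_xlnx: "x \<ge> 0 \<Longrightarrow> eta x = - xlnx x / ln 2"
  unfolding eta_def xlnx_def by (auto simp: log_def)

text \<open>Splitting the sum into classes can only increase the entropy of the spectrum,
  and leaves it unchanged only if distinct classes are orthogonal.\<close>

locale frame_partition =
  fixes n :: nat and S :: "'x set" and \<phi> :: "'x \<Rightarrow> nat \<Rightarrow> complex" and cls :: "'x \<Rightarrow> nat"
    and K :: nat and e :: "nat \<Rightarrow> nat \<Rightarrow> complex" and lam :: "nat \<Rightarrow> real"
    and f :: "nat \<Rightarrow> nat \<Rightarrow> nat \<Rightarrow> complex" and mu :: "nat \<Rightarrow> nat \<Rightarrow> real"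
  assumes finite_S: "finite S" and cls_less: "\<And>x. x \<in> S \<Longrightarrow> cls x < K"
    and eigenbasis_e: "eigenbasis n (frame_mat n \<phi> S) e lam"
    and eigenbasis_f: "\<And>t. t < K \<Longrightarrow> eigenbasis n (frame_mat n \<phi> {x\<in>S. cls x = t}) (f t) (mu t)"
begin

lemma orthonormal_basis_e: "orthonormal_basis n e"
  using eigenbasis_e by (simp add: eigenbasis_def)

lemma orthonormal_basis_f: "t < K \<Longrightarrow> orthonormal_basis n (f t)"
  using eigenbasis_f by (simp add: eigenbasis_def)

lemma frame_op_e:
  assumes "j < n" "v < n"
  shows "frame_op n \<phi> S (e j) v = of_real (lam j) * e j v"
proof -
  have "\<forall>j<n. \<forall>v<n. (\<Sum>v'<n. frame_mat n \<phi> S $$ (v, v') * e j v') = of_real (lam j) * e j v"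
    using eigenbasis_e unfolding eigenbasis_def by (rule conjunct2)
  then have "(\<Sum>v'<n. frame_mat n \<phi> S $$ (v, v') * e j v') = of_real (lam j) * e j v"
    using assms by blast
  then show ?thesis by (simp only: frame_mat_apply[OF assms(2)])
qed

lemma frame_op_f:
  assumes "t < K" "i < n" "v < n"
  shows "frame_op n \<phi> {x\<in>S. cls x = t} (f t i) v = of_real (mu t i) * f t i v"
proof -
  have "\<forall>i<n. \<forall>v<n. (\<Sum>v'<n. frame_mat n \<phi> {x\<in>S. cls x = t} $$ (v, v') * f t i v')
      = of_real (mu t i) * f t i v"
    using eigenbasis_f[OF assms(1)] unfolding eigenbasis_def by (rule conjunct2)
  then have "(\<Sum>v'<n. frame_mat n \<phi> {x\<in>S. cls x = t} $$ (v, v') * f t i v') = of_real (mu t i) * f t i v"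
    using assms by blast
  then show ?thesis by (simp only: frame_mat_apply[OF assms(3)])
qed

lemma cinner_frame_op_e:
  assumes "j < n"
  shows "cinner n (frame_op n \<phi> S (e j)) z = of_real (lam j) * cinner n (e j) z"
proof -
  have "cinner n (frame_op n \<phi> S (e j)) z = cinner n (\<lambda>v. of_real (lam j) * e j v) z"
    by (rule inner_on_cong) (simp_all add: frame_op_e assms)
  then show ?thesis by (simp add: inner_on_scale_left)
qed

lemma cinner_frame_op_f:
  assumes "t < K" "i < n"
  shows "cinner n (frame_op n \<phi> {x\<in>S. cls x = t} (f t i)) z = of_real (mu t i) * cinner n (f t i) z"
proof -
  have "cinner n (frame_op n \<phi> {x\<in>S. cls x = t} (f t i)) z = cinner n (\<lambda>v. of_real (mu t i) * f t i v) z"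
    by (rule inner_on_cong) (simp_all add: frame_op_f assms)
  then show ?thesis by (simp add: inner_on_scale_left)
qed

lemma e_unit: "j < n \<Longrightarrow> cinner n (e j) (e j) = 1"
  using orthonormal_basis_e by (simp add: orthonormal_def)

lemma f_unit: "t < K \<Longrightarrow> i < n \<Longrightarrow> cinner n (f t i) (f t i) = 1"
  using orthonormal_basis_f by (simp add: orthonormal_def)

lemma lam_eq:
  assumes "j < n"
  shows "lam j = (\<Sum>x\<in>S. (cmod (cinner n (\<phi> x) (e j)))\<^sup>2)"
proof -
  have "of_real (lam j) = cinner n (frame_op n \<phi> S (e j)) (e j)"
    by (simp add: cinner_frame_op_e e_unit assms)
  also have "\<dots> = cnj (cinner n (e j) (frame_op n \<phi> S (e j)))" by (rule inner_on_commute)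
  finally show ?thesis unfolding cinner_frame_op_self complex_cnj_complex_of_real of_real_eq_iff .
qed

lemma mu_eq:
  assumes "t < K" "i < n"
  shows "mu t i = (\<Sum>x\<in>{x\<in>S. cls x = t}. (cmod (cinner n (\<phi> x) (f t i)))\<^sup>2)"
proof -
  have "of_real (mu t i) = cinner n (frame_op n \<phi> {x\<in>S. cls x = t} (f t i)) (f t i)"
    by (simp add: cinner_frame_op_f f_unit assms)
  also have "\<dots> = cnj (cinner n (f t i) (frame_op n \<phi> {x\<in>S. cls x = t} (f t i)))"
    by (rule inner_on_commute)
  finally show ?thesis unfolding cinner_frame_op_self complex_cnj_complex_of_real of_real_eq_iff .
qed

lemma lam_nonneg: "j < n \<Longrightarrow> lam j \<ge> 0"
  by (simp add: lam_eq sum_nonneg)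

lemma mu_nonneg: "t < K \<Longrightarrow> i < n \<Longrightarrow> mu t i \<ge> 0"
  by (simp add: mu_eq sum_nonneg)


definition overlap :: "nat \<Rightarrow> nat \<Rightarrow> nat \<Rightarrow> complex" where
  "overlap t i j = cinner n (f t i) (e j)"

text \<open>The share of the eigenvalue \<open>lam j\<close> carried into \<open>mu t i\<close>; for \<open>lam j = 0\<close> the division
  yields \<open>0\<close>, and such \<open>j\<close> indeed carry nothing (\<open>mu_overlap_eq_0\<close>).\<close>

definition weight :: "nat \<Rightarrow> nat \<Rightarrow> nat \<Rightarrow> real" where
  "weight t i j = mu t i * (cmod (overlap t i j))\<^sup>2 / lam j"

lemma weight_nonneg: "t < K \<Longrightarrow> i < n \<Longrightarrow> j < n \<Longrightarrow> weight t i j \<ge> 0"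
  unfolding weight_def using mu_nonneg lam_nonneg by simp

lemma mu_overlap_eq_0:
  assumes "t < K" "i < n" "j < n" "lam j = 0"
  shows "of_real (mu t i) * overlap t i j = 0"
proof -
  have "cinner n (\<phi> x) (e j) = 0" if "x \<in> S" for x
    using lam_eq[OF assms(3)] assms(4) finite_S that by (simp add: sum_nonneg_eq_0_iff)
  then have "cinner n (frame_op n \<phi> {x\<in>S. cls x = t} (f t i)) (e j) = 0"
    by (simp add: cinner_frame_op_left)
  then show ?thesis by (simp add: cinner_frame_op_f assms(1,2) overlap_def)
qed

lemma sum_overlap_sq:
  assumes "t < K" "i < n"
  shows "(\<Sum>j<n. (cmod (overlap t i j))\<^sup>2) = 1"
proof -
  from cinner_self_expand_basis[OF orthonormal_basis_e, of "f t i"] f_unit[OF assms]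
  have "(\<Sum>j<n. (cmod (cinner n (e j) (f t i)))\<^sup>2) = 1" by (metis of_real_eq_1_iff)
  moreover have "cmod (cinner n (e j) (f t i)) = cmod (overlap t i j)" for j
    by (simp add: overlap_def inner_on_commute[of _ "e j"])
  ultimately show ?thesis by simp
qed

lemma sum_weight_lam: "t < K \<Longrightarrow> i < n \<Longrightarrow> (\<Sum>j<n. weight t i j * lam j) = mu t i"
proof -
  assume ti: "t < K" "i < n"
  have "weight t i j * lam j = mu t i * (cmod (overlap t i j))\<^sup>2" if j: "j < n" for j
  proof (cases "lam j = 0")
    case True
    with mu_overlap_eq_0[OF ti j] show ?thesis by (simp add: weight_def)
  qed (simp add: weight_def)
  then show ?thesis by (simp add: sum_distrib_left[symmetric] sum_overlap_sq[OF ti])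
qed

lemma sum_weight_le_1:
  assumes ti: "t < K" "i < n"
  shows "(\<Sum>j<n. weight t i j) \<le> 1"
proof -
  define \<beta> where "\<beta> j x = cinner n (\<phi> x) (e j)" for j x
  define \<gamma> where "\<gamma> x = (if cls x = t then cinner n (\<phi> x) (f t i) else 0)" for x
  have "inner_on S (\<beta> j) (\<beta> j') = (if j = j' then of_real (lam j) else 0)"
    if "j < n" "j' < n" for j j'
  proof -
    have "inner_on S (\<beta> j) (\<beta> j') = cinner n (frame_op n \<phi> S (e j)) (e j')"
      unfolding inner_on_def[of S] \<beta>_def cinner_frame_op_left
      by (intro sum.cong refl) (simp add: inner_on_commute[of _ "e j"])
    then show ?thesis using orthonormal_basis_e that by (simp add: cinner_frame_op_e orthonormal_def)
  qed
  then have bessel: "(\<Sum>j<n. (cmod (inner_on S (\<beta> j) \<gamma>))\<^sup>2 / lam j) \<le> Re (inner_on S \<gamma> \<gamma>)"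
    by (rule bessel_inequality)
  have "inner_on S (\<beta> j) \<gamma> = cnj (of_real (mu t i) * overlap t i j)" if "j < n" for j
  proof -
    have "inner_on S (\<beta> j) \<gamma>
        = (\<Sum>x\<in>S. if cls x = t then cinner n (e j) (\<phi> x) * cinner n (\<phi> x) (f t i) else 0)"
      unfolding inner_on_def[of S] \<beta>_def \<gamma>_def
      by (intro sum.cong refl) (simp add: inner_on_commute[of _ "e j"])
    also have "\<dots> = (\<Sum>x\<in>{x\<in>S. cls x = t}. cinner n (e j) (\<phi> x) * cinner n (\<phi> x) (f t i))"
      by (rule sum.inter_filter[OF finite_S, symmetric])
    also have "\<dots> = cinner n (e j) (frame_op n \<phi> {x\<in>S. cls x = t} (f t i))"
      by (rule cinner_frame_op_right[symmetric])
    also have "\<dots> = cnj (cinner n (frame_op n \<phi> {x\<in>S. cls x = t} (f t i)) (e j))"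
      by (rule inner_on_commute)
    finally show ?thesis by (simp add: cinner_frame_op_f ti overlap_def)
  qed
  then have "(\<Sum>j<n. (cmod (inner_on S (\<beta> j) \<gamma>))\<^sup>2 / lam j) = mu t i * (\<Sum>j<n. weight t i j)"
    using mu_nonneg[OF ti] by (simp add: sum_distrib_left weight_def norm_mult power2_eq_square mult_ac)
  moreover have "Re (inner_on S \<gamma> \<gamma>) = mu t i"
  proof -
    have "Re (inner_on S \<gamma> \<gamma>) = (\<Sum>x\<in>S. if cls x = t then (cmod (cinner n (\<phi> x) (f t i)))\<^sup>2 else 0)"
      unfolding inner_on_self Re_complex_of_real by (intro sum.cong refl) (simp add: \<gamma>_def)
    then show ?thesis by (simp add: mu_eq[OF ti] sum.inter_filter[OF finite_S])
  qed
  ultimately have "mu t i * (\<Sum>j<n. weight t i j) \<le> mu t i" using bessel by simp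
  moreover have "mu t i = 0 \<Longrightarrow> (\<Sum>j<n. weight t i j) = 0" by (simp add: weight_def)
  ultimately show ?thesis using mu_nonneg[OF ti] by (cases "mu t i = 0") auto
qed

lemma sum_weight_classes:
  assumes j: "j < n" and lam: "lam j > 0"
  shows "(\<Sum>t<K. \<Sum>i<n. weight t i j) = 1"
proof -
  have "of_real (\<Sum>i<n. mu t i * (cmod (overlap t i j))\<^sup>2) = cinner n (e j) (frame_op n \<phi> {x\<in>S. cls x = t} (e j))"
    if t: "t < K" for t
  proof -
    have "cinner n (e j) (frame_op n \<phi> {x\<in>S. cls x = t} (e j))
        = (\<Sum>i<n. cinner n (e j) (f t i) * cinner n (frame_op n \<phi> {x\<in>S. cls x = t} (f t i)) (e j))"
      by (subst cinner_expand_basis[OF orthonormal_basis_f[OF t]]) (simp only: cinner_frame_op_swap)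
    also have "\<dots> = (\<Sum>i<n. of_real (mu t i) * (cnj (overlap t i j) * overlap t i j))"
      by (intro sum.cong refl) (simp add: cinner_frame_op_f t overlap_def inner_on_commute[of _ "e j"])
    finally show ?thesis by (simp add: cnj_mult_self of_real_sum)
  qed
  then have "of_real (\<Sum>t<K. \<Sum>i<n. mu t i * (cmod (overlap t i j))\<^sup>2)
      = (\<Sum>t<K. \<Sum>x\<in>{x\<in>S. cls x = t}. cinner n (e j) (\<phi> x) * cinner n (\<phi> x) (e j))"
    by (simp add: of_real_sum cinner_frame_op_right)
  also have "\<dots> = cinner n (e j) (frame_op n \<phi> S (e j))"
    unfolding cinner_frame_op_right by (rule sum.group) (use finite_S cls_less in auto)
  also have "\<dots> = of_real (lam j)"
    by (simp add: cinner_frame_op_swap cinner_frame_op_e j e_unit)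
  finally have "(\<Sum>t<K. \<Sum>i<n. mu t i * (cmod (overlap t i j))\<^sup>2) = lam j"
    by (simp only: of_real_eq_iff)
  then show ?thesis using lam by (simp add: weight_def sum_divide_distrib[symmetric])
qed


definition gap :: "nat \<Rightarrow> nat \<Rightarrow> real" where
  "gap t i = (\<Sum>j<n. weight t i j * xlnx (lam j)) - xlnx (mu t i)"

lemma gap_eq_bregman:
  assumes ti: "t < K" "i < n" and mu: "mu t i > 0"
  shows "gap t i = (\<Sum>j<n. weight t i j * bregman_xlnx (lam j) (mu t i))
    + (1 - (\<Sum>j<n. weight t i j)) * mu t i"
proof -
  let ?m = "mu t i" and ?w = "weight t i"
  have "(\<Sum>j<n. ?w j * xlnx (lam j))
      = (\<Sum>j<n. ?w j * bregman_xlnx (lam j) ?m + ln ?m * (?w j * lam j) + ?w j * lam j - ?m * ?w j)"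
    by (intro sum.cong refl) (simp add: xlnx_def bregman_xlnx_def algebra_simps)
  also have "\<dots> = (\<Sum>j<n. ?w j * bregman_xlnx (lam j) ?m) + ln ?m * ?m + ?m - ?m * (\<Sum>j<n. ?w j)"
    by (simp add: sum.distrib sum_subtractf sum_distrib_left[symmetric] sum_weight_lam[OF ti])
  finally show ?thesis unfolding gap_def xlnx_def by (simp add: algebra_simps)
qed

lemma gap_nonneg:
  assumes ti: "t < K" "i < n"
  shows "gap t i \<ge> 0"
proof (cases "mu t i = 0")
  case True
  then show ?thesis by (simp add: gap_def xlnx_def weight_def)
next
  case False
  with mu_nonneg[OF ti] have mu: "mu t i > 0" by simp
  have "(\<Sum>j<n. weight t i j * bregman_xlnx (lam j) (mu t i)) \<ge> 0"
    using mu by (intro sum_nonneg) (simp add: weight_nonneg[OF ti] bregman_xlnx_nonneg lam_nonneg)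
  moreover have "(1 - (\<Sum>j<n. weight t i j)) * mu t i \<ge> 0"
    using sum_weight_le_1[OF ti] mu by simp
  ultimately show ?thesis by (simp add: gap_eq_bregman[OF ti mu])
qed

lemma sum_gap: "(\<Sum>j<n. xlnx (lam j)) - (\<Sum>t<K. \<Sum>i<n. xlnx (mu t i)) = (\<Sum>t<K. \<Sum>i<n. gap t i)"
proof -
  have "xlnx (lam j) = (\<Sum>t<K. \<Sum>i<n. weight t i j) * xlnx (lam j)" if "j < n" for j
    using lam_nonneg[OF that] sum_weight_classes[OF that] by (cases "lam j = 0") (auto simp: xlnx_def)
  then have "(\<Sum>j<n. xlnx (lam j)) = (\<Sum>j<n. \<Sum>t<K. \<Sum>i<n. weight t i j * xlnx (lam j))"
    by (simp add: sum_distrib_right)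
  also have "\<dots> = (\<Sum>t<K. \<Sum>j<n. \<Sum>i<n. weight t i j * xlnx (lam j))"
    by (rule sum.swap)
  also have "\<dots> = (\<Sum>t<K. \<Sum>i<n. \<Sum>j<n. weight t i j * xlnx (lam j))"
    by (rule sum.cong[OF refl], rule sum.swap)
  finally show ?thesis by (simp add: gap_def sum_subtractf)
qed

lemma entropy_gain_eq_sum_gap:
  "(\<Sum>t<K. \<Sum>i<n. eta (mu t i)) - (\<Sum>j<n. eta (lam j)) = (\<Sum>t<K. \<Sum>i<n. gap t i) / ln 2"
proof -
  have "(\<Sum>t<K. \<Sum>i<n. eta (mu t i)) = - (\<Sum>t<K. \<Sum>i<n. xlnx (mu t i)) / ln 2"
    by (simp add: eta_eq_xlnx mu_nonneg sum_divide_distrib sum_negf)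
  moreover have "(\<Sum>j<n. eta (lam j)) = - (\<Sum>j<n. xlnx (lam j)) / ln 2"
    by (simp add: eta_eq_xlnx lam_nonneg sum_divide_distrib sum_negf)
  ultimately show ?thesis by (simp add: sum_gap[symmetric] diff_divide_distrib)
qed

lemma sum_gap_nonneg: "(\<Sum>t<K. \<Sum>i<n. gap t i) \<ge> 0"
  by (intro sum_nonneg) (simp add: gap_nonneg)

lemma lam_eq_mu_if_gap_eq_0:
  assumes ti: "t < K" "i < n" and mu: "mu t i > 0" and gap: "gap t i = 0"
    and j: "j < n" and ov: "overlap t i j \<noteq> 0"
  shows "lam j = mu t i"
proof -
  have terms: "\<forall>j\<in>{..<n}. weight t i j * bregman_xlnx (lam j) (mu t i) \<ge> 0"
    using mu by (simp add: weight_nonneg[OF ti] bregman_xlnx_nonneg lam_nonneg)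
  moreover have "(1 - (\<Sum>j<n. weight t i j)) * mu t i \<ge> 0"
    using sum_weight_le_1[OF ti] mu by simp
  moreover have "(\<Sum>j<n. weight t i j * bregman_xlnx (lam j) (mu t i)) \<ge> 0"
    using terms by (intro sum_nonneg) auto
  ultimately have "(\<Sum>j<n. weight t i j * bregman_xlnx (lam j) (mu t i)) = 0"
    using gap unfolding gap_eq_bregman[OF ti mu] by linarith
  with terms have "\<forall>j\<in>{..<n}. weight t i j * bregman_xlnx (lam j) (mu t i) = 0"
    by (subst (asm) sum_nonneg_eq_0_iff) auto
  with j have "weight t i j * bregman_xlnx (lam j) (mu t i) = 0" by simp
  moreover have lam: "lam j > 0"
    using lam_nonneg[OF j] mu_overlap_eq_0[OF ti j] mu ov by force
  moreover have "weight t i j > 0" using mu lam ov by (simp add: weight_def)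
  ultimately show ?thesis using bregman_xlnx_eq_0[OF lam mu] by simp
qed

text \<open>If the gap vanishes, \<open>f t i\<close> only overlaps eigenvectors \<open>e j\<close> with eigenvalue \<open>mu t i\<close>, so it is
  an eigenvector of the whole frame operator with the same eigenvalue; the vectors outside
  class \<open>t\<close> then contribute nothing to \<open>mu t i\<close>.\<close>

lemma cinner_other_class_eq_0:
  assumes ti: "t < K" "i < n" and mu: "mu t i > 0" and gap: "gap t i = 0"
    and x: "x \<in> S" "cls x \<noteq> t"
  shows "cinner n (\<phi> x) (f t i) = 0"
proof -
  let ?f = "f t i" and ?norm2 = "\<lambda>x. (cmod (cinner n (\<phi> x) (f t i)))\<^sup>2"
  have "cinner n (e j) (frame_op n \<phi> S ?f) = of_real (lam j) * cnj (overlap t i j)" if "j < n" for j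
    by (simp add: cinner_frame_op_swap cinner_frame_op_e that overlap_def inner_on_commute[of _ ?f])
  then have "cinner n ?f (frame_op n \<phi> S ?f) = (\<Sum>j<n. overlap t i j * (of_real (lam j) * cnj (overlap t i j)))"
    by (subst cinner_expand_basis[OF orthonormal_basis_e]) (simp add: overlap_def)
  also have "\<dots> = (\<Sum>j<n. of_real (mu t i * (cmod (overlap t i j))\<^sup>2))"
  proof (intro sum.cong refl)
    fix j assume "j \<in> {..<n}"
    then have "overlap t i j \<noteq> 0 \<Longrightarrow> lam j = mu t i"
      using lam_eq_mu_if_gap_eq_0[OF ti mu gap] by simp
    then show "overlap t i j * (of_real (lam j) * cnj (overlap t i j))
        = of_real (mu t i * (cmod (overlap t i j))\<^sup>2)"
    proof (cases "overlap t i j = 0")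
      case False
      have "overlap t i j * (of_real (lam j) * cnj (overlap t i j))
          = of_real (lam j) * (overlap t i j * cnj (overlap t i j))"
        by (rule mult.left_commute)
      then show ?thesis by (simp only: \<open>overlap t i j \<noteq> 0 \<Longrightarrow> lam j = mu t i\<close>[OF False]
          complex_norm_square[symmetric] of_real_mult)
    qed simp
  qed
  also have "\<dots> = of_real (mu t i)"
    by (simp only: of_real_sum[symmetric] sum_distrib_left[symmetric] sum_overlap_sq[OF ti] mult_1_right)
  finally have "(\<Sum>x\<in>S. ?norm2 x) = mu t i"
    unfolding cinner_frame_op_self of_real_eq_iff .
  also have "\<dots> = (\<Sum>x\<in>{x\<in>S. cls x = t}. ?norm2 x)" by (rule mu_eq[OF ti])
  moreover have "(\<Sum>x\<in>S. ?norm2 x) = (\<Sum>x\<in>S \<inter> {x. cls x = t}. ?norm2 x) + (\<Sum>x\<in>S - {x. cls x = t}. ?norm2 x)"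
    by (rule sum.Int_Diff[OF finite_S])
  ultimately have "(\<Sum>x\<in>S - {x. cls x = t}. ?norm2 x) = 0"
    by (simp add: Int_def)
  then show ?thesis
    using x finite_S by (simp add: sum_nonneg_eq_0_iff)
qed

lemma cinner_null_eigvec_eq_0:
  assumes "t < K" "i < n" "mu t i = 0" "x \<in> S" "cls x = t"
  shows "cinner n (\<phi> x) (f t i) = 0"
  using mu_eq[OF assms(1,2)] assms(3-5) finite_S by (simp add: sum_nonneg_eq_0_iff)

lemma orthogonal_classes_if_gap_eq_0:
  assumes gap: "(\<Sum>t<K. \<Sum>i<n. gap t i) = 0"
    and x: "x \<in> S" and x': "x' \<in> S" and cls: "cls x \<noteq> cls x'"
  shows "cinner n (\<phi> x) (\<phi> x') = 0"
proof -
  define t where "t = cls x'"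
  have t: "t < K" unfolding t_def using cls_less x' by simp
  have "\<forall>t\<in>{..<K}. (\<Sum>i<n. gap t i) = 0"
    using gap by (subst (asm) sum_nonneg_eq_0_iff) (auto intro!: sum_nonneg gap_nonneg)
  with t have "(\<Sum>i<n. gap t i) = 0" by simp
  then have gap_0: "gap t i = 0" if "i < n" for i
    using that by (subst (asm) sum_nonneg_eq_0_iff) (auto simp: gap_nonneg[OF t])
  have "cinner n (\<phi> x) (\<phi> x') = (\<Sum>i<n. cinner n (\<phi> x) (f t i) * cinner n (f t i) (\<phi> x'))"
    by (rule cinner_expand_basis[OF orthonormal_basis_f[OF t]])
  also have "\<dots> = 0"
  proof (intro sum.neutral ballI)
    fix i assume "i \<in> {..<n}"
    then have i: "i < n" by simp
    show "cinner n (\<phi> x) (f t i) * cinner n (f t i) (\<phi> x') = 0"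
    proof (cases "mu t i = 0")
      case True
      then have "cinner n (\<phi> x') (f t i) = 0"
        using cinner_null_eigvec_eq_0[OF t i] x' t_def by simp
      then show ?thesis by (simp add: inner_on_commute[of _ "f t i"])
    next
      case False
      with mu_nonneg[OF t i] have "mu t i > 0" by simp
      from cinner_other_class_eq_0[OF t i this gap_0[OF i] x] cls t_def show ?thesis by simp
    qed
  qed
  finally show ?thesis .
qed

end

section \<open>Block-diagonal classical-quantum states\<close>

lemma block_index_less:
  fixes t v n K :: nat
  assumes "t < K" "v < n"
  shows "v + t * n < K * n"
proof -
  have "v + t * n < Suc t * n" using assms by simp
  also have "\<dots> \<le> K * n" using assms by (intro mult_right_mono) auto
  finally show ?thesis .
qed

lemma sum_if_eq_both:
  fixes X :: "nat \<Rightarrow> 'a::comm_monoid_add"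
  assumes "k < K"
  shows "(\<Sum>t<K. if t = k \<and> t = k' then X t else 0) = (if k = k' then X k else 0)"
  using assms by (cases "k = k'") (auto intro!: sum.neutral)

lemma eigenbasis_block_diag:
  assumes n: "n > 0" and C: "C \<in> carrier_mat (K * n) (K * n)"
    and C_blocks: "\<And>r r'. r < K * n \<Longrightarrow> r' < K * n \<Longrightarrow>
      C $$ (r, r') = (if r div n = r' div n then B (r div n) $$ (r mod n, r' mod n) else 0)"
    and eb: "\<And>t. t < K \<Longrightarrow> eigenbasis n (B t) (f t) (mu t)"
  shows "eigenbasis (K * n) C
    (\<lambda>N r. if r div n = N div n then f (N div n) (N mod n) (r mod n) else 0)
    (\<lambda>N. mu (N div n) (N mod n))"
    (is "eigenbasis _ _ ?E _")
proof -
  have block: "N div n < K" if "N < K * n" for N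
    using that n by (simp add: less_mult_imp_div_less)
  have split: "(\<Sum>r<K * n. h r) = (\<Sum>t<K. \<Sum>v<n. h (v + t * n))" for h :: "nat \<Rightarrow> complex"
    by (rule sum_mult_product)
  have "cinner (K * n) (?E N) (?E N') = (if N = N' then 1 else 0)"
    if N: "N < K * n" and N': "N' < K * n" for N N'
  proof -
    have "cinner (K * n) (?E N) (?E N')
        = (\<Sum>t<K. if t = N div n \<and> t = N' div n then cinner n (f t (N mod n)) (f t (N' mod n)) else 0)"
      unfolding inner_on_def split using n by (intro sum.cong refl) (auto simp: inner_on_def)
    also have "\<dots> = (if N div n = N' div n then cinner n (f (N div n) (N mod n)) (f (N div n) (N' mod n)) else 0)"
      by (rule sum_if_eq_both[OF block[OF N]])
    also have "\<dots> = (if N = N' then 1 else 0)"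
      using eb[OF block[OF N]] n by (auto simp: eigenbasis_def orthonormal_def) (metis div_mult_mod_eq)
    finally show ?thesis .
  qed
  moreover have "(\<Sum>r'<K * n. C $$ (r, r') * ?E N r') = of_real (mu (N div n) (N mod n)) * ?E N r"
    if N: "N < K * n" and r: "r < K * n" for N r
  proof -
    have "(\<Sum>r'<K * n. C $$ (r, r') * ?E N r')
        = (\<Sum>t<K. if t = r div n \<and> t = N div n
            then (\<Sum>v<n. B t $$ (r mod n, v) * f t (N mod n) v) else 0)"
      unfolding split using n by (intro sum.cong refl) (auto simp: C_blocks[OF r block_index_less])
    also have "\<dots> = (if r div n = N div n
        then (\<Sum>v<n. B (r div n) $$ (r mod n, v) * f (r div n) (N mod n) v) else 0)"
      by (rule sum_if_eq_both[OF block[OF r]])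
    also have "\<dots> = of_real (mu (N div n) (N mod n)) * ?E N r"
      using eb[OF block[OF N]] n by (auto simp: eigenbasis_def)
    finally show ?thesis .
  qed
  ultimately show ?thesis by (simp add: eigenbasis_def orthonormal_def)
qed

lemma vN_entropy_cq_state:
  fixes a :: "nat \<Rightarrow> nat \<Rightarrow> complex" and us :: "nat list" and g :: "nat \<Rightarrow> 'z"
  defines "zs \<equiv> remdups (map g us)"
  assumes n: "n > 0"
    and eb: "\<And>t. t < length zs \<Longrightarrow> eigenbasis n (cq_block m n a us g (zs ! t)) (f t) (mu t)"
  shows "vN_entropy (cq_state m n a us g) = (\<Sum>t<length zs. \<Sum>i<n. eta (mu t i))"
proof -
  let ?K = "length zs"
  have C: "cq_state m n a us g \<in> carrier_mat (?K * n) (?K * n)"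
    by (simp add: cq_state_def zs_def Let_def)
  have "\<And>r r'. r < ?K * n \<Longrightarrow> r' < ?K * n \<Longrightarrow> cq_state m n a us g $$ (r, r')
      = (if r div n = r' div n then cq_block m n a us g (zs ! (r div n)) $$ (r mod n, r' mod n) else 0)"
    by (simp add: cq_state_def zs_def Let_def)
  from eigenbasis_block_diag[OF n C this eb]
  have "vN_entropy (cq_state m n a us g) = (\<Sum>N<?K * n. eta (mu (N div n) (N mod n)))"
    by (rule vN_entropy_eigenbasis[OF C])
  also have "\<dots> = (\<Sum>t<?K. \<Sum>i<n. eta (mu t i))"
    using n by (simp add: sum_mult_product)
  finally show ?thesis .
qed

lemma cq_block_eq_frame_mat: "cq_block m n a us g z = frame_mat n a {x \<in> set us. g x = z}"
  unfolding cq_block_def frame_mat_def by (simp add: sum.inter_filter)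

lemma reduced_state_eq_frame_mat:
  assumes "set us \<subseteq> {..<m}" and "\<And>u v. u < m \<Longrightarrow> u \<notin> set us \<Longrightarrow> v < n \<Longrightarrow> a u v = 0"
  shows "reduced_state m n a = frame_mat n a (set us)"
proof (rule eq_matI)
  fix v v' assume "v < dim_row (frame_mat n a (set us))" "v' < dim_col (frame_mat n a (set us))"
  then have "v < n" "v' < n" by (simp_all add: frame_mat_def)
  then show "reduced_state m n a $$ (v, v') = frame_mat n a (set us) $$ (v, v')"
    unfolding reduced_state_def frame_mat_def
    by (simp, intro sum.mono_neutral_right) (use assms in auto)
qed (simp_all add: reduced_state_def frame_mat_def)

lemma frame_mat_eigenbases:
  obtains f mu where "\<And>t. eigenbasis n (frame_mat n \<phi> (C t)) (f t) (mu t)"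
proof -
  have "\<exists>fm. eigenbasis n (frame_mat n \<phi> (C t)) (fst fm) (snd fm)" for t
  proof -
    obtain f mu where "eigenbasis n (frame_mat n \<phi> (C t)) f mu" by (rule frame_mat_eigenbasis)
    then show ?thesis by (intro exI[of _ "(f, mu)"]) simp
  qed
  then obtain fm where "\<And>t. eigenbasis n (frame_mat n \<phi> (C t)) (fst (fm t)) (snd (fm t))"
    by metis
  then show thesis by (rule that)
qed

lemma remdups_map_index:
  fixes g :: "'a \<Rightarrow> 'z" and us :: "'a list"
  defines "zs \<equiv> remdups (map g us)"
  obtains idx where "\<And>x. x \<in> set us \<Longrightarrow> idx x < length zs \<and> zs ! idx x = g x"
proof
  fix x assume "x \<in> set us"
  then have "\<exists>t. t < length zs \<and> zs ! t = g x" by (simp add: zs_def in_set_conv_nth[symmetric])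
  then show "(LEAST t. t < length zs \<and> zs ! t = g x) < length zs
      \<and> zs ! (LEAST t. t < length zs \<and> zs ! t = g x) = g x"
    by (rule LeastI_ex)
qed

text \<open>Measuring a register whose amplitudes are \<open>a\<close> and recording the outcome \<open>g u\<close> turns the reduced
  state of the kept register, the frame operator of all \<open>a u\<close>, into the block-diagonal state
  whose blocks are the frame operators of the classes \<open>{u. g u = z}\<close>.\<close>

lemma cq_cond_entropy_nonneg_orthogonal:
  fixes a :: "nat \<Rightarrow> nat \<Rightarrow> complex" and g :: "nat \<Rightarrow> 'z"
  assumes n: "n > 0" and us: "set us \<subseteq> {..<m}"
    and a0: "\<And>u v. u < m \<Longrightarrow> u \<notin> set us \<Longrightarrow> v < n \<Longrightarrow> a u v = 0"
  shows "cq_cond_entropy m n a us g \<ge> 0"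
    and "cq_cond_entropy m n a us g = 0 \<Longrightarrow> x \<in> set us \<Longrightarrow> x' \<in> set us \<Longrightarrow> g x \<noteq> g x'
      \<Longrightarrow> cinner n (a x) (a x') = 0"
proof -
  define zs where "zs = remdups (map g us)"
  obtain cls where cls: "\<And>x. x \<in> set us \<Longrightarrow> cls x < length zs \<and> zs ! cls x = g x"
    using remdups_map_index[where g = g and us = us] unfolding zs_def by blast
  have classes: "{x \<in> set us. g x = zs ! t} = {x \<in> set us. cls x = t}" if "t < length zs" for t
    using cls nth_eq_iff_index_eq[of zs _ t] that by (force simp: zs_def)
  obtain e lam where e: "eigenbasis n (frame_mat n a (set us)) e lam"
    by (rule frame_mat_eigenbasis)
  obtain f mu where f: "\<And>t. eigenbasis n (frame_mat n a {x \<in> set us. cls x = t}) (f t) (mu t)"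
    using frame_mat_eigenbases[where C = "\<lambda>t. {x \<in> set us. cls x = t}"] by blast
  interpret frame_partition n "set us" a cls "length zs" e lam f mu
    using cls e f by unfold_locales auto
  have "vN_entropy (cq_state m n a us g) = (\<Sum>t<length zs. \<Sum>i<n. eta (mu t i))"
    unfolding zs_def
    by (rule vN_entropy_cq_state[OF n]) (use f classes in \<open>simp add: cq_block_eq_frame_mat zs_def\<close>)
  moreover have "vN_entropy (reduced_state m n a) = (\<Sum>j<n. eta (lam j))"
    by (simp add: reduced_state_eq_frame_mat[OF us a0] vN_entropy_eigenbasis[OF frame_mat_carrier e])
  ultimately have entropy: "cq_cond_entropy m n a us g = (\<Sum>t<length zs. \<Sum>i<n. gap t i) / ln 2"
    by (simp add: cq_cond_entropy_def entropy_gain_eq_sum_gap)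
  then show "cq_cond_entropy m n a us g \<ge> 0" by (simp add: sum_gap_nonneg)
  assume "cq_cond_entropy m n a us g = 0" and x: "x \<in> set us" "x' \<in> set us" and "g x \<noteq> g x'"
  moreover from this have "cls x \<noteq> cls x'" using cls[OF x(1)] cls[OF x(2)] by metis
  ultimately show "cinner n (a x) (a x') = 0"
    using entropy by (intro orthogonal_classes_if_gap_eq_0) auto
qed

section \<open>Primitives\<close>

lemma primitive_nonneg: "primitive m n P \<Longrightarrow> P x y \<ge> 0"
  unfolding primitive_def by auto

lemma primitive_n_pos: "primitive m n P \<Longrightarrow> n > 0"
  unfolding primitive_def by (cases n) auto

lemma primitive_transp: "primitive m n P \<Longrightarrow> primitive n m (transp_prim P)"
  unfolding primitive_def transp_prim_def by (auto simp: sum.swap[of _ "{..<n}"])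

lemma le_margX: "primitive m n P \<Longrightarrow> y < n \<Longrightarrow> P x y \<le> margX n P x"
  unfolding margX_def by (rule member_le_sum) (auto intro: primitive_nonneg)

lemma le_margY: "primitive m n P \<Longrightarrow> x < m \<Longrightarrow> P x y \<le> margY m P y"
  unfolding margY_def by (rule member_le_sum) (auto intro: primitive_nonneg)

lemma set_suppX: "set (suppX m n P) = {x. x < m \<and> 0 < margX n P x}"
  unfolding suppX_def by auto

lemma eq_0_if_not_in_suppX:
  assumes prim: "primitive m n P" and "x \<notin> set (suppX m n P)" "y < n"
  shows "P x y = 0"
proof (cases "x < m")
  case True
  with assms have "\<not> 0 < margX n P x" by (simp add: set_suppX)
  then show ?thesis using le_margX[OF prim \<open>y < n\<close>, of x] primitive_nonneg[OF prim, of x y] by simp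
next
  case False
  then show ?thesis using prim by (simp add: primitive_def)
qed

text \<open>The dependent part \<open>X\<searrow>Y\<close> is a function of \<open>Y\<close> on the support exactly when any two inputs
  that can produce the same output have the same conditional distribution.\<close>

definition condY_consistent :: "nat \<Rightarrow> nat \<Rightarrow> (nat \<Rightarrow> nat \<Rightarrow> real) \<Rightarrow> bool" where
  "condY_consistent m n P \<longleftrightarrow> (\<forall>x x' y. x < m \<longrightarrow> x' < m \<longrightarrow> y < n \<longrightarrow> P x y > 0 \<longrightarrow> P x' y > 0
     \<longrightarrow> condY n P x = condY n P x')"

lemma margY_eq_sum_suppX:
  assumes "primitive m n P" "y < n"
  shows "margY m P y = (\<Sum>x\<in>set (suppX m n P). P x y)"
  unfolding margY_def
  by (rule sum.mono_neutral_right) (use assms eq_0_if_not_in_suppX in \<open>auto simp: set_suppX\<close>)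

lemma dep_joint_consistent:
  assumes prim: "primitive m n P" and cons: "condY_consistent m n P"
    and y: "y < n" and x0: "x0 < m" "P x0 y > 0"
  shows "dep_joint m n P z y = (if z = condY n P x0 then margY m P y else 0)"
proof -
  have "(if condY n P x = z then P x y else 0) = (if z = condY n P x0 then P x y else 0)"
    if "x \<in> set (suppX m n P)" for x
  proof (cases "P x y > 0")
    case True
    with that cons x0 y have "condY n P x = condY n P x0"
      unfolding condY_consistent_def set_suppX by blast
    then show ?thesis by auto
  next
    case False
    then show ?thesis using primitive_nonneg[OF prim, of x y] by simp
  qed
  then have "dep_joint m n P z y = (\<Sum>x\<in>set (suppX m n P). if z = condY n P x0 then P x y else 0)"
    unfolding dep_joint_def by (rule sum.cong[OF refl])
  then show ?thesis by (simp add: margY_eq_sum_suppX[OF prim y])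
qed

lemma dep_cond_entropy_eq_0_if_consistent:
  assumes prim: "primitive m n P" and cons: "condY_consistent m n P"
  shows "dep_cond_entropy m n P = 0"
proof -
  let ?Z = "condY n P ` set (suppX m n P)"
  have "(\<Sum>z\<in>?Z. eta (dep_joint m n P z y)) = eta (margY m P y)" if y: "y < n" for y
  proof (cases "\<exists>x0<m. P x0 y > 0")
    case True
    then obtain x0 where x0: "x0 < m" "P x0 y > 0" by blast
    then have "condY n P x0 \<in> ?Z"
      using le_margX[OF prim y, of x0] by (simp add: set_suppX)
    then show ?thesis
      by (simp add: dep_joint_consistent[OF prim cons y x0] if_distrib eta_def cong: if_cong)
  next
    case False
    then have "P x y = 0" if "x < m" for x
      using that primitive_nonneg[OF prim, of x y] by force
    moreover have "x \<in> set (suppX m n P) \<Longrightarrow> x < m" for x by (simp add: set_suppX)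
    ultimately show ?thesis
      by (simp add: dep_joint_def margY_eq_sum_suppX[OF prim y] eta_def)
  qed
  then show ?thesis
    unfolding dep_cond_entropy_def dep_values_def set_remdups set_map
    by (subst sum.swap) simp
qed

lemma columns_proportional_if_transp_consistent:
  assumes prim: "primitive m n P" and cons: "condY_consistent n m (transp_prim P)"
    and u: "u < m" "P u y > 0" "P u w > 0" and yw: "y < n" "w < n" and x: "x < m"
  shows "P x y * margY m P w = P x w * margY m P y"
proof -
  have "condY m (transp_prim P) y = condY m (transp_prim P) w"
    using cons u yw unfolding condY_consistent_def transp_prim_def by blast
  from fun_cong[OF this, of x] x have "P x y / margY m P y = P x w / margY m P w"
    by (simp add: condY_def transp_prim_def margX_def margY_def)
  moreover have "margY m P y > 0" "margY m P w > 0"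
    using le_margY[OF prim u(1)] u(2,3) by (auto intro: less_le_trans)
  ultimately show ?thesis by (simp add: field_simps)
qed

lemma rows_proportional_if_transp_consistent:
  assumes prim: "primitive m n P" and cons: "condY_consistent n m (transp_prim P)"
    and x: "x < m" "x' < m" and y: "y < n" "P x y > 0" "P x' y > 0" and w: "w < n"
  shows "P x w * P x' y = P x' w * P x y"
proof -
  have q: "margY m P y > 0" using le_margY[OF prim x(1)] y(2) by (auto intro: less_le_trans)
  consider "P x w > 0" | "P x' w > 0" | "P x w = 0" "P x' w = 0"
    using primitive_nonneg[OF prim, of x w] primitive_nonneg[OF prim, of x' w] by linarith
  then show ?thesis
  proof cases
    case 1
    have "P x y * margY m P w = P x w * margY m P y" "P x' y * margY m P w = P x' w * margY m P y"
      using columns_proportional_if_transp_consistent[OF prim cons x(1) y(2) 1 y(1) w] x by auto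
    then have "P x w * P x' y * margY m P y = P x' w * P x y * margY m P y"
      by (metis mult.commute mult.left_commute)
    then show ?thesis using q by simp
  next
    case 2
    have "P x y * margY m P w = P x w * margY m P y" "P x' y * margY m P w = P x' w * margY m P y"
      using columns_proportional_if_transp_consistent[OF prim cons x(2) y(3) 2 y(1) w] x by auto
    then have "P x w * P x' y * margY m P y = P x' w * P x y * margY m P y"
      by (metis mult.commute mult.left_commute)
    then show ?thesis using q by simp
  qed simp
qed

lemma condY_consistent_if_transp_consistent:
  assumes prim: "primitive m n P" and cons: "condY_consistent n m (transp_prim P)"
  shows "condY_consistent m n P"
  unfolding condY_consistent_def
proof (intro allI impI ext)
  fix x x' y w
  assume x: "x < m" "x' < m" and y: "y < n" "P x y > 0" "P x' y > 0"
  have rows: "P x w' * P x' y = P x' w' * P x y" if "w' < n" for w'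
    by (rule rows_proportional_if_transp_consistent[OF prim cons x y that])
  have "margX n P x * P x' y = margX n P x' * P x y"
    unfolding margX_def sum_distrib_right by (intro sum.cong refl) (simp add: rows)
  then have "w < n \<Longrightarrow> P x w * margX n P x' * P x y = P x' w * margX n P x * P x y"
    using rows[of w] by (metis mult.commute mult.left_commute)
  moreover have "margX n P x > 0" "margX n P x' > 0"
    using le_margX[OF prim y(1)] x y(2,3) by (auto intro: less_le_trans)
  ultimately show "condY n P x w = condY n P x' w"
    using y(2) by (auto simp: condY_def field_simps)
qed

lemma cq_cond_entropy_pos_if_inconsistent:
  assumes prim: "primitive m n P"
    and amp: "\<And>u v. u < m \<Longrightarrow> v < n \<Longrightarrow> a u v = of_real (sqrt (P u v))"
    and incons: "\<not> condY_consistent m n P"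
  shows "cq_cond_entropy m n a (suppX m n P) (condY n P) > 0"
proof -
  from incons obtain x x' y where x: "x < m" "x' < m" and y: "y < n" "P x y > 0" "P x' y > 0"
    and differ: "condY n P x \<noteq> condY n P x'"
    unfolding condY_consistent_def by blast
  have supp: "x \<in> set (suppX m n P)" "x' \<in> set (suppX m n P)"
    using x y le_margX[OF prim y(1)] by (auto simp: set_suppX intro: less_le_trans)
  have a0: "a u v = 0" if "u < m" "u \<notin> set (suppX m n P)" "v < n" for u v
    using that amp eq_0_if_not_in_suppX[OF prim] by simp
  have "set (suppX m n P) \<subseteq> {..<m}" by (auto simp: set_suppX)
  note entropy = cq_cond_entropy_nonneg_orthogonal[where a = a and g = "condY n P",
      OF primitive_n_pos[OF prim] this a0]
  have "0 < sqrt (P x y) * sqrt (P x' y)" using y by simp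
  also have "\<dots> \<le> (\<Sum>v<n. sqrt (P x v) * sqrt (P x' v))"
    by (rule member_le_sum) (use y primitive_nonneg[OF prim] in auto)
  finally have "(\<Sum>v<n. sqrt (P x v) * sqrt (P x' v)) \<noteq> 0" by simp
  moreover have "cinner n (a x) (a x') = of_real (\<Sum>v<n. sqrt (P x v) * sqrt (P x' v))"
    unfolding inner_on_def of_real_sum by (intro sum.cong refl) (simp add: amp x)
  ultimately have "cinner n (a x) (a x') \<noteq> 0" by (simp only: of_real_eq_0_iff) simp
  then have "cq_cond_entropy m n a (suppX m n P) (condY n P) \<noteq> 0"
    using entropy(2) supp differ by blast
  with entropy(1) show ?thesis by simp
qed

lemma canonical_embedding_amp:
  assumes "u < m" "v < n"
  shows "canonical_embedding m n P $ (u * n + v) = of_real (sqrt (P u v))"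
  using block_index_less[OF assms(1,2)] assms
  by (simp add: canonical_embedding_def regular_embedding_def mult.commute)

theorem lemma1:
  fixes m n :: nat and P :: "nat \<Rightarrow> nat \<Rightarrow> real"
  assumes "primitive m n P"
    and "nontrivial_primitive m n P"
  shows "S_XY_B m n P (canonical_embedding m n P) > 0
       \<and> S_YX_A m n P (canonical_embedding m n P) > 0"
proof
  have incons: "\<not> condY_consistent m n P"
    using assms dep_cond_entropy_eq_0_if_consistent by (auto simp: nontrivial_primitive_def)
  show "S_XY_B m n P (canonical_embedding m n P) > 0"
    unfolding S_XY_B_def
    by (rule cq_cond_entropy_pos_if_inconsistent[OF assms(1) _ incons]) (simp add: canonical_embedding_amp)
  have "\<not> condY_consistent n m (transp_prim P)"
    using incons condY_consistent_if_transp_consistent[OF assms(1)] by blast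
  with primitive_transp[OF assms(1)] show "S_YX_A m n P (canonical_embedding m n P) > 0"
    unfolding S_YX_A_def
    by (intro cq_cond_entropy_pos_if_inconsistent) (simp_all add: canonical_embedding_amp transp_prim_def)
qed

end
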